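(* Let $(\mathfrak J,B)$ be a nilpotent pseudo-euclidean Jordan algebra with $\mathfrak J\notin\mathcal E$, where $\mathcal E$ consists of $\{0\}$ and the one-dimensional Jordan algebra with zero product. Then $\mathfrak J$ is obtained (up to isomorphism) from finitely many elements $\mathfrak J_1,\dots,\mathfrak J_n$ of $\mathcal E$ by a finite sequence of orthogonal direct sums of pseudo-euclidean Jordan algebras and/or generalized double extensions by the one-dimensional Jordan algebra with zero product.
   Context: All algebras are finite-dimensional over a field $\mathbb K$ of characteristic zero. A Jordan algebra is a commutative algebra with $x(yx^2)=(xy)x^2$; $(\mathfrak J,B)$ is pseudo-euclidean if $B$ is a nondegenerate symmetric bilinear form with $B(xy,z)=B(x,yz)$. The orthogonal direct sum of pseudo-euclidean algebras is the product algebra with the direct sum of the forms. Associator $(x,y,z)=(xy)z-x(yz)$. Admissible pair of a Jordan algebra $\mathfrak J_1$: $(D,x_0)\in\mathrm{End}(\mathfrak J_1)\times\mathfrak J_1$ with, for all $x,y$: $D(x^2y)=x^2D(y)+2D(x)(xy)-2x(D(x)y)$; $D(x)D(y)-D(D(x)y)=\tfrac12(x_0,y,x)$; $D(x_0x)=x_0D(x)$; $xD(x^2)=x^2D(x)$; $D^2(x^2)=2(D(x))^2-2xD^2(x)+x_0x^2$; $D^3(x)=\tfrac32x_0D(x)-\tfrac12xD(x_0)$; $D^2(x_0)=x_0^2$. Generalized double extension of a pseudo-euclidean $(\mathfrak J_1,B_1)$ by the one-dimensional algebra with zero product via such a pair with $D$ $B_1$-symmetric and $k\in\mathbb K$: $\mathbb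 Ka\oplus\mathfrak J_1\oplus\mathbb Kb$ with product $b\star\cdot=\cdot\star b=0$, $a\star a=x_0+kb$, $x\star y=xy+B_1(Dx,y)b$, $a\star x=x\star a=D(x)+B_1(x_0,x)b$ ($x,y\in\mathfrak J_1$), and scalar product extending $B_1$ with $B(a,b)=1$, $B(a,a)=B(b,b)=0$, $a,b\perp\mathfrak J_1$. *)

theory Defs
  imports Main
begin

text \<open>A finite-dimensional algebra with a bilinear form over a field 'k, given in
coordinates with respect to a basis e_0,...,e_(n-1): e_i e_j = sum_k cst i j k e_k and
B(e_i,e_j) = gram i j.\<close>

record 'k alg =
  dim  :: nat
  cst  :: "nat \<Rightarrow> nat \<Rightarrow> nat \<Rightarrow> 'k"
  gram :: "nat \<Rightarrow> nat \<Rightarrow> 'k"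

definition carrier :: "('k::field_char_0) alg \<Rightarrow> (nat \<Rightarrow> 'k) set" where
  "carrier A = {x. \<forall>i\<ge>dim A. x i = 0}"

definition vadd :: "(nat \<Rightarrow> 'k::field_char_0) \<Rightarrow> (nat \<Rightarrow> 'k) \<Rightarrow> nat \<Rightarrow> 'k" where
  "vadd x y = (\<lambda>i. x i + y i)"

definition vsub :: "(nat \<Rightarrow> 'k::field_char_0) \<Rightarrow> (nat \<Rightarrow> 'k) \<Rightarrow> nat \<Rightarrow> 'k" where
  "vsub x y = (\<lambda>i. x i - y i)"

definition vsmul :: "'k::field_char_0 \<Rightarrow> (nat \<Rightarrow> 'k) \<Rightarrow> nat \<Rightarrow> 'k" where
  "vsmul a x = (\<lambda>i. a * x i)"

definition vzero :: "nat \<Rightarrow> 'k::field_char_0" where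
  "vzero = (\<lambda>i. 0)"

definition unitv :: "nat \<Rightarrow> nat \<Rightarrow> 'k::field_char_0" where
  "unitv i = (\<lambda>j. if j = i then 1 else 0)"

definition mul :: "('k::field_char_0) alg \<Rightarrow> (nat \<Rightarrow> 'k) \<Rightarrow> (nat \<Rightarrow> 'k) \<Rightarrow> nat \<Rightarrow> 'k" where
  "mul A x y = (\<lambda>k. if k < dim A
      then (\<Sum>i<dim A. \<Sum>j<dim A. x i * y j * cst A i j k) else 0)"

definition bil :: "('k::field_char_0) alg \<Rightarrow> (nat \<Rightarrow> 'k) \<Rightarrow> (nat \<Rightarrow> 'k) \<Rightarrow> 'k" where
  "bil A x y = (\<Sum>i<dim A. \<Sum>j<dim A. x i * y j * gram A i j)"

definition assoc :: "('k::field_char_0) alg \<Rightarrow> (nat \<Rightarrow> 'k) \<Rightarrow> (nat \<Rightarrow> 'k) \<Rightarrow> (nat \<Rightarrow> 'k) \<Rightarrow> nat \<Rightarrow> 'k" where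
  "assoc A x y z = vsub (mul A (mul A x y) z) (mul A x (mul A y z))"

definition jordan :: "('k::field_char_0) alg \<Rightarrow> bool" where
  "jordan A \<longleftrightarrow> (\<forall>x\<in>carrier A. \<forall>y\<in>carrier A.
      mul A x y = mul A y x \<and>
      mul A x (mul A y (mul A x x)) = mul A (mul A x y) (mul A x x))"

definition pe_jordan :: "('k::field_char_0) alg \<Rightarrow> bool" where
  "pe_jordan A \<longleftrightarrow> jordan A \<and>
     (\<forall>x\<in>carrier A. \<forall>y\<in>carrier A. bil A x y = bil A y x) \<and>
     (\<forall>x\<in>carrier A. (\<forall>y\<in>carrier A. bil A x y = 0) \<longrightarrow> x = vzero) \<and>
     (\<forall>x\<in>carrier A. \<forall>y\<in>carrier A. \<forall>z\<in>carrier A.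
        bil A (mul A x y) z = bil A x (mul A y z))"

text \<open>prodk A k x: x is a product of k elements of A (arbitrary bracketing).
The span of these is A^k; A is nilpotent iff A^m = 0 for some m >= 1.\<close>
inductive prodk :: "('k::field_char_0) alg \<Rightarrow> nat \<Rightarrow> (nat \<Rightarrow> 'k) \<Rightarrow> bool"
  for A where
  base: "x \<in> carrier A \<Longrightarrow> prodk A 1 x"
| step: "prodk A i x \<Longrightarrow> prodk A j y \<Longrightarrow> prodk A (i + j) (mul A x y)"

definition nilpotent_alg :: "('k::field_char_0) alg \<Rightarrow> bool" where
  "nilpotent_alg A \<longleftrightarrow> (\<exists>m\<ge>1. \<forall>x. prodk A m x \<longrightarrow> x = vzero)"

definition alg_iso :: "('k::field_char_0) alg \<Rightarrow> 'k alg \<Rightarrow> bool" where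
  "alg_iso A C \<longleftrightarrow> (\<exists>f. bij_betw f (carrier A) (carrier C) \<and>
     (\<forall>a. \<forall>x\<in>carrier A. f (vsmul a x) = vsmul a (f x)) \<and>
     (\<forall>x\<in>carrier A. \<forall>y\<in>carrier A.
        f (vadd x y) = vadd (f x) (f y) \<and>
        f (mul A x y) = mul C (f x) (f y) \<and>
        bil C (f x) (f y) = bil A x y))"

definition E_class :: "('k::field_char_0) alg set" where
  "E_class = {A. dim A = 0 \<or>
      (dim A = 1 \<and> cst A 0 0 0 = 0 \<and> gram A 0 0 \<noteq> 0)}"

definition osum :: "('k::field_char_0) alg \<Rightarrow> 'k alg \<Rightarrow> 'k alg" where
  "osum A C = (let n = dim A; m = dim C in
     \<lparr> dim = n + m,
       cst = (\<lambda>i j k. if i < n \<and> j < n \<and> k < n then cst A i j k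
               else if n \<le> i \<and> n \<le> j \<and> n \<le> k \<and> i < n + m \<and> j < n + m \<and> k < n + m
               then cst C (i - n) (j - n) (k - n) else 0),
       gram = (\<lambda>i j. if i < n \<and> j < n then gram A i j
               else if n \<le> i \<and> n \<le> j \<and> i < n + m \<and> j < n + m
               then gram C (i - n) (j - n) else 0) \<rparr>)"

text \<open>The endomorphism D of A given by its matrix: D e_j = sum_i d i j e_i.\<close>
definition Dmap :: "('k::field_char_0) alg \<Rightarrow> (nat \<Rightarrow> nat \<Rightarrow> 'k) \<Rightarrow> (nat \<Rightarrow> 'k) \<Rightarrow> nat \<Rightarrow> 'k" where
  "Dmap A d x = (\<lambda>i. if i < dim A then (\<Sum>j<dim A. d i j * x j) else 0)"

definition admissible :: "('k::field_char_0) alg \<Rightarrow> (nat \<Rightarrow> nat \<Rightarrow> 'k) \<Rightarrow> (nat \<Rightarrow> 'k) \<Rightarrow> bool" where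
  "admissible A d x0 \<longleftrightarrow> x0 \<in> carrier A \<and>
    (let D = Dmap A d; m = mul A; sq = (\<lambda>x. mul A x x) in
     (\<forall>x\<in>carrier A. \<forall>y\<in>carrier A.
        D (m (sq x) y) =
          vsub (vadd (m (sq x) (D y)) (vsmul 2 (m (D x) (m x y))))
               (vsmul 2 (m x (m (D x) y))) \<and>
        vsub (m (D x) (D y)) (D (m (D x) y)) = vsmul (1/2) (assoc A x0 y x) \<and>
        D (m x0 x) = m x0 (D x) \<and>
        m x (D (sq x)) = m (sq x) (D x) \<and>
        D (D (sq x)) =
          vadd (vsub (vsmul 2 (sq (D x))) (vsmul 2 (m x (D (D x))))) (m x0 (sq x)) \<and>
        D (D (D x)) = vsub (vsmul (3/2) (m x0 (D x))) (vsmul (1/2) (m x (D x0)))) \<and>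
     D (D x0) = sq x0)"

definition bil_symmetric_map :: "('k::field_char_0) alg \<Rightarrow> (nat \<Rightarrow> nat \<Rightarrow> 'k) \<Rightarrow> bool" where
  "bil_symmetric_map A d \<longleftrightarrow>
     (\<forall>x\<in>carrier A. \<forall>y\<in>carrier A. bil A (Dmap A d x) y = bil A x (Dmap A d y))"

text \<open>Generalized double extension of A by the one-dimensional zero algebra via (D,x0) and k.
Basis of the result: index 0 is a, index i+1 is e_i (i < n), index n+1 is b.\<close>
definition dext :: "('k::field_char_0) alg \<Rightarrow> (nat \<Rightarrow> nat \<Rightarrow> 'k) \<Rightarrow> (nat \<Rightarrow> 'k) \<Rightarrow> 'k \<Rightarrow> 'k alg" where
  "dext A d x0 \<kappa> = (let n = dim A; D = Dmap A d in
     \<lparr> dim = n + 2,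
       cst = (\<lambda>i j k.
         if n + 2 \<le> i \<or> n + 2 \<le> j \<or> n + 2 \<le> k then 0
         else if i = n + 1 \<or> j = n + 1 then 0
         else if i = 0 \<and> j = 0 then
           (if k = n + 1 then \<kappa> else if k = 0 then 0 else x0 (k - 1))
         else if i = 0 then
           (if k = n + 1 then bil A x0 (unitv (j - 1))
            else if k = 0 then 0 else D (unitv (j - 1)) (k - 1))
         else if j = 0 then
           (if k = n + 1 then bil A x0 (unitv (i - 1))
            else if k = 0 then 0 else D (unitv (i - 1)) (k - 1))
         else
           (if k = n + 1 then bil A (D (unitv (i - 1))) (unitv (j - 1))
            else if k = 0 then 0 else cst A (i - 1) (j - 1) (k - 1))),
       gram = (\<lambda>i j.
         if n + 2 \<le> i \<or> n + 2 \<le> j then 0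
         else if (i = 0 \<and> j = n + 1) \<or> (i = n + 1 \<and> j = 0) then 1
         else if i = 0 \<or> j = 0 \<or> i = n + 1 \<or> j = n + 1 then 0
         else gram A (i - 1) (j - 1)) \<rparr>)"

inductive_set gen_class :: "('k::field_char_0) alg set" where
  base: "A \<in> E_class \<Longrightarrow> A \<in> gen_class"
| osum: "A \<in> gen_class \<Longrightarrow> C \<in> gen_class \<Longrightarrow> osum A C \<in> gen_class"
| dext: "A \<in> gen_class \<Longrightarrow> admissible A d x0 \<Longrightarrow> bil_symmetric_map A d \<Longrightarrow>
         dext A d x0 \<kappa> \<in> gen_class"

end

theory Submission
  imports Defs "HOL-Library.Function_Algebras" "HOL.Vector_Spaces"
begin

text \<open>Induction on the dimension. A nonzero nilpotent \<open>J\<close> has a nonzero element \<open>z\<close> annihilating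
  \<open>J\<close> (a nonzero product of maximal length). If some annihilating \<open>u\<close> has \<open>B(u, u) \<noteq> 0\<close>,
  then \<open>u\<^sup>\<bottom>\<close> is an ideal and \<open>J\<close> is the orthogonal sum of \<open>u\<^sup>\<bottom>\<close> and the line \<open>\<bbbK> u\<close> with
  zero product. Otherwise \<open>z\<close> is isotropic and, by nondegeneracy, has an isotropic partner \<open>a\<close>
  with \<open>B(a, z) = 1\<close>. The complement \<open>W = {a, z}\<^sup>\<bottom>\<close>, with the product followed by the
  orthogonal projection \<open>P\<close> onto \<open>W\<close>, is again a nilpotent pseudo-euclidean Jordan algebra,
  and \<open>J\<close> is its generalized double extension by \<open>D = P \<circ> L\<^sub>a\<close> and \<open>x\<^sub>0 = P(a\<^sup>2)\<close>: the
  conditions on an admissible pair are exactly the coefficients of the Jordan identity for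
  \<open>P(x y)\<close> evaluated at \<open>t a + x\<close>.\<close>

subsection \<open>Coordinate vectors\<close>

lemma vadd_eq [simp]: "vadd x y = x + y"
  by (simp add: vadd_def plus_fun_def)

lemma vsub_eq [simp]: "vsub x y = x - y"
  by (simp add: vsub_def fun_eq_iff)

lemma vzero_eq [simp]: "vzero = 0"
  by (simp add: vzero_def fun_eq_iff)

lemma vsmul_apply [simp]: "vsmul a x i = a * x i"
  by (simp add: vsmul_def)

interpretation VS: vector_space "vsmul :: 'k::field_char_0 \<Rightarrow> (nat \<Rightarrow> 'k) \<Rightarrow> nat \<Rightarrow> 'k"
  by unfold_locales (auto simp: fun_eq_iff algebra_simps)

lemma vsmul_add: "vsmul a (x + y) = vsmul a x + vsmul a y"
  by (simp add: fun_eq_iff algebra_simps)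

lemma vsmul_add_left: "vsmul (a + b) x = vsmul a x + vsmul b x"
  by (simp add: fun_eq_iff algebra_simps)

lemma vsmul_vsmul [simp]: "vsmul a (vsmul b x) = vsmul (a * b) x"
  by (simp add: fun_eq_iff)

lemma vsmul_zero [simp]: "vsmul a 0 = 0" "vsmul 0 x = 0"
  by (simp_all add: fun_eq_iff)

lemma vsmul_if_one_zero [simp]: "vsmul (if P then 1 else 0) x = (if P then x else 0)"
  by simp

lemma vsmul_minus: "vsmul (- a) x = - vsmul a x"
  by (simp add: fun_eq_iff)

lemma vsmul_sum: "vsmul a (sum f I) = (\<Sum>i\<in>I. vsmul a (f i))"
  using sum_comp_morphism[of "vsmul a" f I] by (simp add: vsmul_add comp_def)

lemma if_one_zero_mult [simp]:
  "(if P then 1 else 0) * x = (if P then x else (0::'a::semiring_1))"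
  "x * (if P then 1 else 0) = (if P then x else 0)"
  "(if P then if Q then 1 else 0 else 0) * x = (if P then if Q then x else 0 else 0)"
  by simp_all

lemma sum_fun_apply: "(sum f A) x = (\<Sum>a\<in>A. f a x)"
  by (induct A rule: infinite_finite_induct) auto

lemma carrier_add [intro, simp]: "x \<in> carrier A \<Longrightarrow> y \<in> carrier A \<Longrightarrow> x + y \<in> carrier A"
  and carrier_diff [intro, simp]: "x \<in> carrier A \<Longrightarrow> y \<in> carrier A \<Longrightarrow> x - y \<in> carrier A"
  and carrier_smul [intro, simp]: "x \<in> carrier A \<Longrightarrow> vsmul a x \<in> carrier A"
  and carrier_zero [intro, simp]: "0 \<in> carrier A"
  and carrier_mul [intro, simp]: "mul A x y \<in> carrier A"
  and carrier_unitv [intro, simp]: "i < dim A \<Longrightarrow> unitv i \<in> carrier A"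
  and carrier_Dmap [intro, simp]: "Dmap A d x \<in> carrier A"
  by (simp_all add: carrier_def mul_def unitv_def Dmap_def)

lemma carrier_sum [intro]: "(\<And>i. i \<in> I \<Longrightarrow> f i \<in> carrier A) \<Longrightarrow> sum f I \<in> carrier A"
  by (induct I rule: infinite_finite_induct) auto

lemma subspace_carrier: "VS.subspace (carrier A)"
  by (auto simp: VS.subspace_def)

lemma carrier_expand: "x \<in> carrier A \<Longrightarrow> x = (\<Sum>i<dim A. vsmul (x i) (unitv i))"
  by (auto simp: fun_eq_iff sum_fun_apply unitv_def carrier_def)

lemma carrier_span_unitv: "carrier A \<subseteq> VS.span (unitv ` {..<dim A})"
proof
  fix x assume "x \<in> carrier A"
  moreover have "(\<Sum>i<dim A. vsmul (x i) (unitv i)) \<in> VS.span (unitv ` {..<dim A})"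
    by (intro VS.span_sum VS.span_scale VS.span_base) auto
  ultimately show "x \<in> VS.span (unitv ` {..<dim A})"
    by (simp flip: carrier_expand)
qed

definition vtrunc :: "nat \<Rightarrow> (nat \<Rightarrow> 'k::field_char_0) \<Rightarrow> nat \<Rightarrow> 'k" where
  "vtrunc m c = (\<lambda>l. if l < m then c l else 0)"

lemma vtrunc_carrier [simp]: "vtrunc (dim A) c \<in> carrier A"
  by (simp add: vtrunc_def carrier_def)

lemma vtrunc_id: "x \<in> carrier A \<Longrightarrow> vtrunc (dim A) x = x"
  by (auto simp: vtrunc_def carrier_def fun_eq_iff)

lemma vtrunc_add: "vtrunc m (x + y) = vtrunc m x + vtrunc m y"
  and vtrunc_smul: "vtrunc m (vsmul a x) = vsmul a (vtrunc m x)"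
  and vtrunc_unitv: "vtrunc m (unitv i) = (if i < m then unitv i else 0)"
  by (auto simp: vtrunc_def unitv_def fun_eq_iff)

lemma mul_add_left: "mul A (x + y) z = mul A x z + mul A y z"
  and mul_add_right: "mul A z (x + y) = mul A z x + mul A z y"
  and mul_smul_left: "mul A (vsmul a x) y = vsmul a (mul A x y)"
  and mul_smul_right: "mul A y (vsmul a x) = vsmul a (mul A y x)"
  by (auto simp: mul_def fun_eq_iff algebra_simps sum.distrib sum_distrib_left)

lemma mul_zero [simp]: "mul A 0 y = 0" "mul A y 0 = 0"
  by (auto simp: mul_def fun_eq_iff)

lemma mul_sum_left: "mul A (sum f I) y = (\<Sum>i\<in>I. mul A (f i) y)"
  using sum_comp_morphism[of "\<lambda>x. mul A x y" f I] by (simp add: mul_add_left comp_def)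

lemma mul_sum_right: "mul A y (sum f I) = (\<Sum>i\<in>I. mul A y (f i))"
  using sum_comp_morphism[of "mul A y" f I] by (simp add: mul_add_right comp_def)

lemma bil_add_left: "bil A (x + y) z = bil A x z + bil A y z"
  and bil_add_right: "bil A z (x + y) = bil A z x + bil A z y"
  and bil_smul_left: "bil A (vsmul a x) y = a * bil A x y"
  and bil_smul_right: "bil A y (vsmul a x) = a * bil A y x"
  and bil_diff_left: "bil A (x - y) z = bil A x z - bil A y z"
  and bil_diff_right: "bil A z (x - y) = bil A z x - bil A z y"
  by (auto simp: bil_def algebra_simps sum.distrib sum_distrib_left sum_subtractf)

lemma bil_zero [simp]: "bil A 0 y = 0" "bil A y 0 = 0"
  by (auto simp: bil_def)

lemma bil_sum_left: "bil A (sum f I) y = (\<Sum>i\<in>I. bil A (f i) y)"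
  using sum_comp_morphism[of "\<lambda>x. bil A x y" f I] by (simp add: bil_add_left comp_def)

lemma bil_sum_right: "bil A y (sum f I) = (\<Sum>i\<in>I. bil A y (f i))"
  using sum_comp_morphism[of "bil A y" f I] by (simp add: bil_add_right comp_def)

lemma mul_unitv:
  "i < dim A \<Longrightarrow> j < dim A \<Longrightarrow> mul A (unitv i) (unitv j) = (\<lambda>k. if k < dim A then cst A i j k else 0)"
  by (auto simp: mul_def unitv_def fun_eq_iff)

lemma bil_unitv: "i < dim A \<Longrightarrow> j < dim A \<Longrightarrow> bil A (unitv i) (unitv j) = gram A i j"
  by (simp add: bil_def unitv_def)

lemma mul_expand:
  "mul M (\<Sum>i\<in>I. vsmul (c i) (u i)) (\<Sum>j\<in>K. vsmul (d j) (v j)) =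
   (\<Sum>i\<in>I. \<Sum>j\<in>K. vsmul (c i * d j) (mul M (u i) (v j)))"
  unfolding mul_sum_left mul_smul_left
  by (simp only: mul_sum_right mul_smul_right vsmul_sum vsmul_vsmul)

lemma bil_expand:
  "bil M (\<Sum>i\<in>I. vsmul (c i) (u i)) (\<Sum>j\<in>K. vsmul (d j) (v j)) =
   (\<Sum>i\<in>I. \<Sum>j\<in>K. c i * d j * bil M (u i) (v j))"
  unfolding bil_sum_left bil_smul_left
  by (simp only: bil_sum_right bil_smul_right sum_distrib_left mult.assoc)

lemma pe_comm: "pe_jordan J \<Longrightarrow> x \<in> carrier J \<Longrightarrow> y \<in> carrier J \<Longrightarrow> mul J x y = mul J y x"
  and pe_jordan_identity: "pe_jordan J \<Longrightarrow> x \<in> carrier J \<Longrightarrow> y \<in> carrier J \<Longrightarrow>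
    mul J x (mul J y (mul J x x)) = mul J (mul J x y) (mul J x x)"
  and pe_sym: "pe_jordan J \<Longrightarrow> x \<in> carrier J \<Longrightarrow> y \<in> carrier J \<Longrightarrow> bil J x y = bil J y x"
  and pe_nondegenerate: "pe_jordan J \<Longrightarrow> x \<in> carrier J \<Longrightarrow>
    (\<And>y. y \<in> carrier J \<Longrightarrow> bil J x y = 0) \<Longrightarrow> x = 0"
  and pe_invariant: "pe_jordan J \<Longrightarrow> x \<in> carrier J \<Longrightarrow> y \<in> carrier J \<Longrightarrow> z \<in> carrier J \<Longrightarrow>
    bil J (mul J x y) z = bil J x (mul J y z)"
  unfolding pe_jordan_def jordan_def by auto

subsection \<open>Isomorphisms onto compressed subspaces\<close>

definition lin_on :: "(nat \<Rightarrow> 'k::field_char_0) set \<Rightarrow> ((nat \<Rightarrow> 'k) \<Rightarrow> nat \<Rightarrow> 'k) \<Rightarrow> bool" where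
  "lin_on S f \<longleftrightarrow>
    (\<forall>x\<in>S. \<forall>y\<in>S. f (x + y) = f x + f y) \<and> (\<forall>a. \<forall>x\<in>S. f (vsmul a x) = vsmul a (f x))"

text \<open>\<open>sub_iso A J W P g\<close>: \<open>g\<close> is an isometric isomorphism from \<open>A\<close> onto the subspace \<open>W\<close>
  of \<open>J\<close>, where \<open>W\<close> carries the compressed product \<open>P (x y)\<close>; with \<open>W = carrier J\<close> and
  \<open>P = id\<close> this is \<open>alg_iso\<close>.\<close>
definition sub_iso :: "'k::field_char_0 alg \<Rightarrow> 'k alg \<Rightarrow> (nat \<Rightarrow> 'k) set \<Rightarrow> ((nat \<Rightarrow> 'k) \<Rightarrow> nat \<Rightarrow> 'k)
    \<Rightarrow> ((nat \<Rightarrow> 'k) \<Rightarrow> nat \<Rightarrow> 'k) \<Rightarrow> bool" where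
  "sub_iso A J W P g \<longleftrightarrow> bij_betw g (carrier A) W \<and> lin_on (carrier A) g \<and>
     (\<forall>x\<in>carrier A. \<forall>y\<in>carrier A.
        g (mul A x y) = P (mul J (g x) (g y)) \<and> bil J (g x) (g y) = bil A x y)"

lemma lin_on_add: "lin_on S f \<Longrightarrow> x \<in> S \<Longrightarrow> y \<in> S \<Longrightarrow> f (x + y) = f x + f y"
  and lin_on_smul: "lin_on S f \<Longrightarrow> x \<in> S \<Longrightarrow> f (vsmul a x) = vsmul a (f x)"
  unfolding lin_on_def by blast+

lemma lin_on_id: "lin_on S id"
  unfolding lin_on_def by simp

lemma lin_on_0: "lin_on S f \<Longrightarrow> VS.subspace S \<Longrightarrow> f 0 = 0"
  using lin_on_smul[of S f 0 0] VS.subspace_0 by fastforce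

lemma lin_on_diff:
  assumes "lin_on S f" "VS.subspace S" "x \<in> S" "y \<in> S"
  shows "f (x - y) = f x - f y"
proof -
  have y: "vsmul (- 1) y \<in> S" using assms VS.subspace_scale by blast
  have "x - y = x + vsmul (- 1) y" by (simp add: fun_eq_iff)
  then have "f (x - y) = f x + f (vsmul (- 1) y)" using lin_on_add[OF assms(1,3) y] by simp
  also have "\<dots> = f x - f y" using lin_on_smul[OF assms(1,4), of "- 1"] by (simp add: vsmul_minus)
  finally show ?thesis .
qed

lemma lin_on_sum:
  assumes "lin_on S f" "VS.subspace S" "\<And>i. i \<in> I \<Longrightarrow> w i \<in> S"
  shows "f (sum w I) = (\<Sum>i\<in>I. f (w i))"
  using assms(3)
proof (induct I rule: infinite_finite_induct)
  case (insert i F)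
  then have "sum w F \<in> S" by (intro VS.subspace_sum[OF assms(2)]) auto
  then have "f (w i + sum w F) = f (w i) + f (sum w F)"
    using insert lin_on_add[OF assms(1)] by blast
  moreover have "f (sum w F) = (\<Sum>i\<in>F. f (w i))" using insert by auto
  ultimately show ?case using insert.hyps by (metis sum.insert)
qed (simp_all add: lin_on_0[OF assms(1,2)])

lemma lin_on_expand:
  assumes "lin_on (carrier A) g" "x \<in> carrier A"
  shows "g x = (\<Sum>i<dim A. vsmul (x i) (g (unitv i)))"
proof -
  have "g x = g (\<Sum>i<dim A. vsmul (x i) (unitv i))"
    using carrier_expand[OF assms(2)] by simp
  also have "\<dots> = (\<Sum>i<dim A. g (vsmul (x i) (unitv i)))"
    by (rule lin_on_sum[OF assms(1) subspace_carrier]) auto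
  also have "\<dots> = (\<Sum>i<dim A. vsmul (x i) (g (unitv i)))"
    by (rule sum.cong) (auto intro: lin_on_smul[OF assms(1)])
  finally show ?thesis .
qed

lemma lin_on_inj_on:
  assumes "lin_on S f" "VS.subspace S" "\<And>x. x \<in> S \<Longrightarrow> f x = 0 \<Longrightarrow> x = 0"
  shows "inj_on f S"
proof (rule inj_onI)
  fix x y assume "x \<in> S" "y \<in> S" "f x = f y"
  then have "x - y = 0"
    using assms lin_on_diff[OF assms(1,2)] VS.subspace_diff by (metis diff_self)
  then show "x = y" by simp
qed

lemma sub_isoD:
  assumes "sub_iso A J W P g"
  shows sub_iso_bij: "bij_betw g (carrier A) W"
    and sub_iso_lin: "lin_on (carrier A) g"
    and sub_iso_mul: "x \<in> carrier A \<Longrightarrow> y \<in> carrier A \<Longrightarrow> g (mul A x y) = P (mul J (g x) (g y))"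
    and sub_iso_bil: "x \<in> carrier A \<Longrightarrow> y \<in> carrier A \<Longrightarrow> bil J (g x) (g y) = bil A x y"
  using assms by (simp_all add: sub_iso_def)

lemma sub_iso_in: "sub_iso A J W P g \<Longrightarrow> x \<in> carrier A \<Longrightarrow> g x \<in> W"
  by (rule bij_betw_apply[OF sub_iso_bij])

lemma sub_iso_inj: "sub_iso A J W P g \<Longrightarrow> x \<in> carrier A \<Longrightarrow> y \<in> carrier A \<Longrightarrow> g x = g y \<Longrightarrow> x = y"
  unfolding sub_iso_def bij_betw_def inj_on_def by blast

lemma sub_iso_surj: "sub_iso A J W P g \<Longrightarrow> z \<in> W \<Longrightarrow> \<exists>x\<in>carrier A. g x = z"
  unfolding sub_iso_def bij_betw_def by blast

lemma sub_iso_0: "sub_iso A J W P g \<Longrightarrow> g 0 = 0"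
  using lin_on_0[OF sub_iso_lin subspace_carrier] by blast

lemma alg_iso_iff_sub_iso: "alg_iso A C \<longleftrightarrow> (\<exists>f. sub_iso A C (carrier C) id f)"
  unfolding alg_iso_def sub_iso_def lin_on_def by auto

lemma sub_iso_from_basis:
  assumes bij: "bij_betw g (carrier A) W" and lin: "lin_on (carrier A) g"
    and P: "lin_on (carrier J) P"
    and mul: "\<And>i j. i < dim A \<Longrightarrow> j < dim A \<Longrightarrow>
      g (mul A (unitv i) (unitv j)) = P (mul J (g (unitv i)) (g (unitv j)))"
    and gram: "\<And>i j. i < dim A \<Longrightarrow> j < dim A \<Longrightarrow> bil J (g (unitv i)) (g (unitv j)) = gram A i j"
  shows "sub_iso A J W P g"
  unfolding sub_iso_def
proof (intro conjI ballI bij lin)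
  fix x y assume x: "x \<in> carrier A" and y: "y \<in> carrier A"
  let ?n = "dim A"
  let ?e = "\<lambda>i j. vsmul (x i * y j) (mul A (unitv i) (unitv j))"
  let ?f = "\<lambda>i j. vsmul (x i * y j) (mul J (g (unitv i)) (g (unitv j)))"
  have "g (mul A x y) = g (\<Sum>i<?n. \<Sum>j<?n. ?e i j)"
    using mul_expand[of A] carrier_expand[OF x] carrier_expand[OF y] by metis
  also have "\<dots> = (\<Sum>i<?n. \<Sum>j<?n. g (?e i j))"
    by (auto intro!: sum.cong simp: lin_on_sum[OF lin subspace_carrier] carrier_sum)
  also have "\<dots> = (\<Sum>i<?n. \<Sum>j<?n. P (?f i j))"
    by (intro sum.cong refl) (simp add: lin_on_smul[OF lin] lin_on_smul[OF P] mul)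
  also have "\<dots> = P (\<Sum>i<?n. \<Sum>j<?n. ?f i j)"
    by (auto intro!: sum.cong simp: lin_on_sum[OF P subspace_carrier] carrier_sum)
  also have "\<dots> = P (mul J (g x) (g y))"
    using mul_expand[of J] lin_on_expand[OF lin x] lin_on_expand[OF lin y] by metis
  finally show "g (mul A x y) = P (mul J (g x) (g y))" .
  have "bil J (g x) (g y) = (\<Sum>i<?n. \<Sum>j<?n. x i * y j * bil J (g (unitv i)) (g (unitv j)))"
    using bil_expand[of J] lin_on_expand[OF lin x] lin_on_expand[OF lin y] by metis
  also have "\<dots> = (\<Sum>i<?n. \<Sum>j<?n. x i * y j * bil A (unitv i) (unitv j))"
    by (intro sum.cong refl) (simp add: gram bil_unitv)
  also have "\<dots> = bil A x y"
    using bil_expand[of A] carrier_expand[OF x] carrier_expand[OF y] by metis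
  finally show "bil J (g x) (g y) = bil A x y" .
qed

lemma sub_iso_comp:
  assumes f: "sub_iso A J1 (carrier J1) id f" and g: "sub_iso J1 J W P g"
  shows "sub_iso A J W P (g \<circ> f)"
proof -
  have fJ1: "x \<in> carrier A \<Longrightarrow> f x \<in> carrier J1" for x
    using sub_iso_in[OF f] .
  have "lin_on (carrier A) (g \<circ> f)"
    using lin_on_add[OF sub_iso_lin[OF f]] lin_on_add[OF sub_iso_lin[OF g]] fJ1
      lin_on_smul[OF sub_iso_lin[OF f]] lin_on_smul[OF sub_iso_lin[OF g]]
    unfolding lin_on_def by simp
  then show ?thesis
    using bij_betw_trans[OF sub_iso_bij[OF f] sub_iso_bij[OF g]]
      sub_isoD(3,4)[OF f] sub_isoD(3,4)[OF g] fJ1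
    unfolding sub_iso_def by simp
qed

lemma alg_iso_refl: "alg_iso A A"
  unfolding alg_iso_def by (rule exI[of _ id]) auto

lemma alg_iso_sym:
  assumes "alg_iso A C" shows "alg_iso C A"
proof -
  obtain f where f: "bij_betw f (carrier A) (carrier C)"
    and smul: "\<forall>a. \<forall>x\<in>carrier A. f (vsmul a x) = vsmul a (f x)"
    and ops: "\<forall>x\<in>carrier A. \<forall>y\<in>carrier A. f (vadd x y) = vadd (f x) (f y) \<and>
        f (mul A x y) = mul C (f x) (f y) \<and> bil C (f x) (f y) = bil A x y"
    using assms unfolding alg_iso_def by blast
  define h where "h = inv_into (carrier A) f"
  have h: "bij_betw h (carrier C) (carrier A)"
    unfolding h_def by (rule bij_betw_inv_into[OF f])
  have hA: "x \<in> carrier C \<Longrightarrow> h x \<in> carrier A" for x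
    by (rule bij_betw_apply[OF h])
  have fh: "x \<in> carrier C \<Longrightarrow> f (h x) = x" for x
    unfolding h_def using f by (simp add: bij_betw_def f_inv_into_f)
  have hf: "x \<in> carrier A \<Longrightarrow> h (f x) = x" for x
    unfolding h_def using f by (simp add: bij_betw_def inv_into_f_f)
  show ?thesis unfolding alg_iso_def
  proof (intro exI[of _ h] conjI ballI allI h)
    fix a x assume x: "x \<in> carrier C"
    then show "h (vsmul a x) = vsmul a (h x)"
      using smul hf[of "vsmul a (h x)"] hA fh by auto
  next
    fix x y assume "x \<in> carrier C" "y \<in> carrier C"
    then show "h (vadd x y) = vadd (h x) (h y)" "h (mul C x y) = mul A (h x) (h y)"
      "bil A (h x) (h y) = bil C x y"
      using ops hf[of "vadd (h x) (h y)"] hf[of "mul A (h x) (h y)"] hA fh by (auto, metis)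
  qed
qed

subsection \<open>Realizing a compressed subspace as an algebra of smaller dimension\<close>

lemma proper_subspace_basis:
  fixes J :: "'k::field_char_0 alg"
  assumes W: "VS.subspace W" "W \<subseteq> carrier J" and u: "u \<in> carrier J" "u \<notin> W"
  obtains B where "finite B" "B \<subseteq> W" "VS.independent B" "W \<subseteq> VS.span B" "card B < dim J"
proof -
  obtain B where B: "B \<subseteq> W" "VS.independent B" "W \<subseteq> VS.span B"
    by (rule VS.basis_exists)
  have "VS.span B \<subseteq> W" using VS.span_minimal[OF B(1) W(1)] .
  then have "VS.independent (insert u B)" using VS.independent_insertI B(2) u(2) by blast
  moreover have "insert u B \<subseteq> VS.span (unitv ` {..<dim J})"
    using B(1) W(2) u(1) carrier_span_unitv by blast
  ultimately have "finite (insert u B) \<and>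
      card (insert u B) \<le> card (unitv ` {..<dim J} :: (nat \<Rightarrow> 'k) set)"
    by (intro VS.independent_span_bound) simp_all
  moreover have "card (unitv ` {..<dim J} :: (nat \<Rightarrow> 'k) set) \<le> dim J"
    using card_image_le[of "{..<dim J}" unitv] by simp
  moreover have "u \<notin> B" using B(1) u(2) by blast
  ultimately have fin: "finite B" and "card (insert u B) \<le> dim J" by auto
  with \<open>u \<notin> B\<close> have "card B < dim J" by simp
  then show thesis using that B fin by blast
qed

lemma coordinates_bij:
  assumes B: "finite B" "B \<subseteq> W" "VS.independent B" "W \<subseteq> VS.span B" and W: "VS.subspace W"
    and w: "bij_betw w {..<card B} B"
  shows "bij_betw (\<lambda>c. \<Sum>i<card B. vsmul (c i) (w i)) {c. \<forall>i\<ge>card B. c i = 0} W"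
proof -
  let ?m = "card B" and ?C = "{c. \<forall>i\<ge>card B. c i = 0}"
  let ?g = "\<lambda>c. \<Sum>i<?m. vsmul (c i) (w i)"
  have reindex: "(\<Sum>i<?m. vsmul (U (w i)) (w i)) = (\<Sum>v\<in>B. vsmul (U v) v)" for U
    using sum.reindex_bij_betw[OF w, of "\<lambda>v. vsmul (U v) v"] by simp
  have "inj_on ?g ?C"
  proof (rule inj_onI)
    fix c c' assume c: "c \<in> ?C" "c' \<in> ?C" and e: "?g c = ?g c'"
    define U where "U v = c (inv_into {..<?m} w v) - c' (inv_into {..<?m} w v)" for v
    have Uw: "i < ?m \<Longrightarrow> U (w i) = c i - c' i" for i
      unfolding U_def by (metis bij_betw_imp_inj_on inv_into_f_f lessThan_iff w)
    have "(\<Sum>v\<in>B. vsmul (U v) v) = (\<Sum>i<?m. vsmul (c i - c' i) (w i))"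
      by (simp add: reindex[symmetric] Uw)
    also have "\<dots> = ?g c - ?g c'"
      by (simp add: sum_subtractf fun_eq_iff sum_fun_apply algebra_simps)
    finally have "(\<Sum>v\<in>B. vsmul (U v) v) = 0" using e by simp
    then have "U (w i) = 0" if "i < ?m" for i
      using B that bij_betw_apply[OF w] unfolding VS.dependent_finite[OF B(1)] by fastforce
    then have "c i = c' i" for i
      using c Uw by (cases "i < ?m") auto
    then show "c = c'" by blast
  qed
  moreover have "?g ` ?C = W"
  proof
    have "i < ?m \<Longrightarrow> w i \<in> W" for i using w B(2) bij_betw_apply by fastforce
    then show "?g ` ?C \<subseteq> W"
      by (auto intro!: VS.subspace_sum[OF W] VS.subspace_scale[OF W])
    show "W \<subseteq> ?g ` ?C"
    proof
      fix z assume "z \<in> W"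
      then obtain U where U: "z = (\<Sum>v\<in>B. vsmul (U v) v)"
        using B(4) unfolding VS.span_finite[OF B(1)] by blast
      let ?c = "\<lambda>i. if i < ?m then U (w i) else 0"
      have "?g ?c = z" unfolding U reindex[symmetric] by simp
      then show "z \<in> ?g ` ?C" by (intro image_eqI[where x="?c"]) auto
    qed
  qed
  ultimately show ?thesis unfolding bij_betw_def by blast
qed

lemma sub_iso_exists:
  fixes J :: "'k::field_char_0 alg"
  assumes W: "VS.subspace W" "W \<subseteq> carrier J"
    and P: "lin_on (carrier J) P" and PW: "\<And>x y. x \<in> W \<Longrightarrow> y \<in> W \<Longrightarrow> P (mul J x y) \<in> W"
    and u: "u \<in> carrier J" "u \<notin> W"
  obtains J1 g where "sub_iso J1 J W P g" "dim J1 < dim J"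
proof (rule proper_subspace_basis[OF W u])
  fix B assume B: "finite B" "B \<subseteq> W" "VS.independent B" "W \<subseteq> VS.span B"
    and card_B: "card B < dim J"
  obtain w where w: "bij_betw w {..<card B} B"
    using ex_bij_betw_nat_finite[OF B(1)] unfolding atLeast0LessThan by blast
  define m where "m = card B"
  have wW: "i < m \<Longrightarrow> w i \<in> W" for i using w B(2) bij_betw_apply unfolding m_def by fastforce
  note bij = coordinates_bij[OF B W(1) w, folded m_def]
  define g where "g c = (\<Sum>i<m. vsmul (c i) (w i))" for c :: "nat \<Rightarrow> 'k"
  define coord where "coord = inv_into {c. \<forall>i\<ge>m. c i = 0} g"
  define J1 where "J1 = \<lparr> dim = m, cst = (\<lambda>i j. coord (P (mul J (w i) (w j)))),
                          gram = (\<lambda>i j. bil J (w i) (w j)) \<rparr>"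
  have carrier_J1: "carrier J1 = {c. \<forall>i\<ge>m. c i = 0}"
    unfolding carrier_def J1_def by simp
  have gC: "g ` carrier J1 = W"
    using bij unfolding g_def bij_betw_def carrier_J1 by blast
  have coord: "coord z \<in> carrier J1 \<and> g (coord z) = z" if "z \<in> W" for z
  proof -
    have "z \<in> g ` {c. \<forall>i\<ge>m. c i = 0}" using that gC carrier_J1 by simp
    from inv_into_into[OF this] f_inv_into_f[OF this] show ?thesis
      unfolding coord_def carrier_J1 by blast
  qed
  have g_unitv: "i < m \<Longrightarrow> g (unitv i) = w i" for i
    unfolding g_def unitv_def by simp
  have "sub_iso J1 J W P g"
  proof (rule sub_iso_from_basis[OF _ _ P])
    show "bij_betw g (carrier J1) W" using bij unfolding carrier_J1 g_def .
    show "lin_on (carrier J1) g"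
      unfolding lin_on_def g_def by (simp add: vsmul_add_left sum.distrib vsmul_sum)
    fix i j assume i: "i < dim J1" and j: "j < dim J1"
    then have wij: "P (mul J (w i) (w j)) \<in> W" using PW wW unfolding J1_def by simp
    have "mul J1 (unitv i) (unitv j) = coord (P (mul J (w i) (w j)))"
      using coord[OF wij] i j unfolding mul_unitv[OF i j] carrier_def
      by (auto simp: J1_def fun_eq_iff)
    then show "g (mul J1 (unitv i) (unitv j)) = P (mul J (g (unitv i)) (g (unitv j)))"
      using coord[OF wij] i j g_unitv unfolding J1_def by simp
    show "bil J (g (unitv i)) (g (unitv j)) = gram J1 i j"
      using i j g_unitv unfolding J1_def by simp
  qed
  then show thesis using that card_B unfolding J1_def m_def by simp
qed

lemma sub_iso_pe_jordan:
  assumes g: "sub_iso A J W P g"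
    and comm: "\<And>x y. x \<in> W \<Longrightarrow> y \<in> W \<Longrightarrow> P (mul J x y) = P (mul J y x)"
    and jordan: "\<And>x y. x \<in> W \<Longrightarrow> y \<in> W \<Longrightarrow>
        P (mul J x (P (mul J y (P (mul J x x))))) = P (mul J (P (mul J x y)) (P (mul J x x)))"
    and sym: "\<And>x y. x \<in> W \<Longrightarrow> y \<in> W \<Longrightarrow> bil J x y = bil J y x"
    and nondeg: "\<And>x. x \<in> W \<Longrightarrow> (\<forall>y\<in>W. bil J x y = 0) \<Longrightarrow> x = 0"
    and invariant: "\<And>x y z. x \<in> W \<Longrightarrow> y \<in> W \<Longrightarrow> z \<in> W \<Longrightarrow>
        bil J (P (mul J x y)) z = bil J x (P (mul J y z))"
  shows "pe_jordan A"
proof -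
  note gmul = sub_iso_mul[OF g] and gW = sub_iso_in[OF g] and inj = sub_iso_inj[OF g]
    and gbil = sub_iso_bil[OF g, symmetric]
  have "jordan A" unfolding jordan_def
  proof (intro ballI conjI)
    fix x y assume x: "x \<in> carrier A" and y: "y \<in> carrier A"
    show "mul A x y = mul A y x"
      by (rule inj) (simp_all add: gmul x y comm gW)
    show "mul A x (mul A y (mul A x x)) = mul A (mul A x y) (mul A x x)"
      by (rule inj) (simp_all add: gmul x y jordan gW)
  qed
  moreover have "\<forall>x\<in>carrier A. (\<forall>y\<in>carrier A. bil A x y = 0) \<longrightarrow> x = vzero"
  proof (intro ballI impI)
    fix x assume x: "x \<in> carrier A" and h: "\<forall>y\<in>carrier A. bil A x y = 0"
    have "\<forall>z\<in>W. bil J (g x) z = 0"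
    proof
      fix z assume "z \<in> W"
      then obtain y where "y \<in> carrier A" "g y = z" using sub_iso_surj[OF g] by blast
      then show "bil J (g x) z = 0" using h x sub_iso_bil[OF g x] by auto
    qed
    then have "g x = g 0" using nondeg gW x sub_iso_0[OF g] by simp
    then show "x = vzero" using inj x by simp
  qed
  ultimately show ?thesis
    unfolding pe_jordan_def by (simp add: gbil gmul sym invariant gW)
qed

lemma prodk_carrier: "prodk A k x \<Longrightarrow> x \<in> carrier A"
  by (induct rule: prodk.induct) auto

text \<open>The compression \<open>P\<close> may only move a product by an element of \<open>E\<close>, a subspace of the
  annihilator meeting \<open>W\<close> trivially; hence products of \<open>k\<close> factors in \<open>A\<close> correspond to
  products of \<open>k\<close> factors in \<open>J\<close> up to \<open>E\<close>.\<close>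
lemma sub_iso_nilpotent:
  assumes g: "sub_iso A J W P g" and nil: "nilpotent_alg J" and WJ: "W \<subseteq> carrier J"
    and E0: "0 \<in> E" and E_add: "\<And>e e'. e \<in> E \<Longrightarrow> e' \<in> E \<Longrightarrow> e + e' \<in> E"
    and EJ: "E \<subseteq> carrier J"
    and E_ann: "\<And>e y. e \<in> E \<Longrightarrow> y \<in> carrier J \<Longrightarrow> mul J e y = 0 \<and> mul J y e = 0"
    and PE: "\<And>x y. x \<in> carrier J \<Longrightarrow> y \<in> carrier J \<Longrightarrow> P (mul J x y) - mul J x y \<in> E"
    and WE: "\<And>e. e \<in> E \<Longrightarrow> e \<in> W \<Longrightarrow> e = 0"
  shows "nilpotent_alg A"
proof -
  have prodk_image: "\<exists>z e. prodk J k z \<and> e \<in> E \<and> g c = z + e" if "prodk A k c" for k c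
    using that
  proof (induct rule: prodk.induct)
    case (base x)
    then have "prodk J 1 (g x)" using sub_iso_in[OF g] WJ by (blast intro: prodk.base)
    then show ?case using E0 by force
  next
    case (step i x j y)
    obtain z e where ze: "prodk J i z" "e \<in> E" "g x = z + e" using step by blast
    obtain z' e' where ze': "prodk J j z'" "e' \<in> E" "g y = z' + e'" using step by blast
    have xy: "x \<in> carrier A" "y \<in> carrier A" using step prodk_carrier by blast+
    have zJ: "z \<in> carrier J" "z' \<in> carrier J" using ze ze' prodk_carrier by blast+
    have eJ: "e \<in> carrier J" "e' \<in> carrier J" using ze ze' EJ by blast+
    have gJ: "g x \<in> carrier J" "g y \<in> carrier J" using xy sub_iso_in[OF g] WJ by blast+
    have "mul J (g x) (g y) = mul J z z' + mul J z e' + (mul J e z' + mul J e e')"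
      unfolding ze(3) ze'(3) by (simp add: mul_add_left mul_add_right)
    also have "\<dots> = mul J z z'" using E_ann ze(2) ze'(2) zJ eJ by simp
    finally have "g (mul A x y) = mul J z z' + (P (mul J (g x) (g y)) - mul J (g x) (g y))"
      unfolding sub_iso_mul[OF g xy] by simp
    moreover have "prodk J (i + j) (mul J z z')" using ze(1) ze'(1) by (rule prodk.step)
    ultimately show ?case using PE gJ by blast
  qed
  obtain m where m: "m \<ge> 1" "\<forall>x. prodk J m x \<longrightarrow> x = vzero"
    using nil unfolding nilpotent_alg_def by blast
  have "c = vzero" if c: "prodk A m c" for c
  proof -
    obtain z e where ze: "prodk J m z" "e \<in> E" "g c = z + e" using prodk_image[OF c] by blast
    then have "g c = e" using m(2) by simp
    then have "g c = g 0"
      using WE ze(2) sub_iso_in[OF g prodk_carrier[OF c]] sub_iso_0[OF g] by simp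
    then show ?thesis using sub_iso_inj[OF g] prodk_carrier[OF c] by simp
  qed
  then show ?thesis unfolding nilpotent_alg_def using m(1) by blast
qed

lemma nilpotent_annihilator_exists:
  assumes nil: "nilpotent_alg J" and "dim J \<noteq> 0"
  obtains z where "z \<in> carrier J" "z \<noteq> 0" "\<forall>y\<in>carrier J. mul J z y = 0"
proof -
  obtain m where m: "m \<ge> 1" "\<forall>x. prodk J m x \<longrightarrow> x = vzero"
    using nil unfolding nilpotent_alg_def by blast
  have e0: "prodk J 1 (unitv 0)" using assms(2) by (intro prodk.base) simp
  have e0_nz: "(unitv 0 :: nat \<Rightarrow> 'a) \<noteq> 0" by (auto simp: unitv_def fun_eq_iff)
  define S where "S = {k. 1 \<le> k \<and> k < m \<and> (\<exists>x. prodk J k x \<and> x \<noteq> 0)}"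
  have "m \<noteq> 1" using m e0 e0_nz by force
  then have "1 \<in> S" unfolding S_def using m(1) e0 e0_nz by auto
  moreover have fin: "finite S" unfolding S_def by simp
  ultimately have "Max S \<in> S" using Max_in by blast
  define k where "k = Max S"
  then obtain x where x: "prodk J k x" "x \<noteq> 0" "k < m"
    using \<open>Max S \<in> S\<close> unfolding S_def by blast
  \<comment> \<open>a nonzero product of maximal length is annihilated by every further factor\<close>
  have "mul J x y = 0" if y: "y \<in> carrier J" for y
  proof -
    have p: "prodk J (k + 1) (mul J x y)" using x(1) prodk.base[OF y] by (rule prodk.step)
    show ?thesis
    proof (cases "k + 1 < m")
      case True
      have "k + 1 \<notin> S" using Max_ge[OF fin] unfolding k_def by fastforce
      then show ?thesis using True p unfolding S_def by auto
    next
      case False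
      then have "k + 1 = m" using x(3) by simp
      then show ?thesis using p m(2) by simp
    qed
  qed
  then show thesis using that x prodk_carrier by blast
qed

subsection \<open>An anisotropic vector in the annihilator splits off orthogonally\<close>

definition line_alg :: "'k::field_char_0 \<Rightarrow> 'k alg" where
  "line_alg \<beta> = \<lparr> dim = 1, cst = (\<lambda>i j k. 0), gram = (\<lambda>i j. \<beta>) \<rparr>"

lemma line_alg_E_class: "\<beta> \<noteq> 0 \<Longrightarrow> line_alg \<beta> \<in> E_class"
  by (simp add: E_class_def line_alg_def)

locale anisotropic_annihilator =
  fixes J :: "'k::field_char_0 alg" and u :: "nat \<Rightarrow> 'k"
  assumes pe: "pe_jordan J" and u: "u \<in> carrier J"
    and u_ann: "\<forall>y\<in>carrier J. mul J u y = 0" and uu: "bil J u u \<noteq> 0"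
begin

definition W :: "(nat \<Rightarrow> 'k) set" where
  "W = {x\<in>carrier J. bil J x u = 0}"

lemma W_carrier: "W \<subseteq> carrier J"
  unfolding W_def by blast

lemma W_subspace: "VS.subspace W"
  unfolding VS.subspace_def W_def by (auto simp: bil_add_left bil_smul_left)

lemma u_notin_W: "u \<notin> W"
  using uu unfolding W_def by simp

lemma mul_u: "y \<in> carrier J \<Longrightarrow> mul J u y = 0" "y \<in> carrier J \<Longrightarrow> mul J y u = 0"
  using u_ann pe_comm[OF pe u] by auto

lemma mul_W: "x \<in> W \<Longrightarrow> y \<in> W \<Longrightarrow> mul J x y \<in> W"
  using pe_invariant[OF pe _ _ u, of x y] mul_u W_carrier unfolding W_def by auto

lemma orth_decomp: "z \<in> carrier J \<Longrightarrow> z - vsmul (bil J z u / bil J u u) u \<in> W"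
  using u uu unfolding W_def by (auto simp: bil_diff_left bil_smul_left)

lemma realization_pe_jordan:
  assumes g: "sub_iso J1 J W id g"
  shows "pe_jordan J1"
proof (rule sub_iso_pe_jordan[OF g])
  fix x y z assume "x \<in> W" "y \<in> W" "z \<in> W"
  then have xyz: "x \<in> carrier J" "y \<in> carrier J" "z \<in> carrier J" using W_carrier by auto
  show "id (mul J x y) = id (mul J y x)" using pe_comm[OF pe xyz(1,2)] by simp
  show "id (mul J x (id (mul J y (id (mul J x x))))) = id (mul J (id (mul J x y)) (id (mul J x x)))"
    using pe_jordan_identity[OF pe xyz(1,2)] by simp
  show "bil J x y = bil J y x" using pe_sym[OF pe xyz(1,2)] .
  show "bil J (id (mul J x y)) z = bil J x (id (mul J y z))" using pe_invariant[OF pe xyz] by simp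
next
  fix x assume x: "x \<in> W" and orth: "\<forall>y\<in>W. bil J x y = 0"
  show "x = 0"
  proof (rule pe_nondegenerate[OF pe])
    show "x \<in> carrier J" using x W_carrier by blast
    fix z assume z: "z \<in> carrier J"
    let ?t = "bil J z u / bil J u u"
    have "bil J x z = bil J x (z - vsmul ?t u) + ?t * bil J x u"
      by (simp add: bil_diff_right bil_smul_right)
    also have "\<dots> = 0" using orth orth_decomp[OF z] x unfolding W_def by simp
    finally show "bil J x z = 0" .
  qed
qed

lemma realization_nilpotent: "sub_iso J1 J W id g \<Longrightarrow> nilpotent_alg J \<Longrightarrow> nilpotent_alg J1"
  by (erule sub_iso_nilpotent[where E="{0}"]) (use W_carrier in auto)

end

locale anisotropic_realization = anisotropic_annihilator +
  fixes A1 and h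
  assumes h: "sub_iso A1 J W id h"
begin

abbreviation "m \<equiv> dim A1"

definition T where
  "T = osum A1 (line_alg (bil J u u))"

definition \<Phi> where
  "\<Phi> c = h (vtrunc m c) + vsmul (c m) u"

lemma dim_T: "dim T = m + 1"
  unfolding T_def osum_def line_alg_def Let_def by simp

lemma cst_T: "cst T i j k = (if i < m \<and> j < m \<and> k < m then cst A1 i j k else 0)"
  unfolding T_def osum_def line_alg_def Let_def by simp

lemma gram_T: "i < m + 1 \<Longrightarrow> j < m + 1 \<Longrightarrow>
    gram T i j = (if i < m \<and> j < m then gram A1 i j else if i = m \<and> j = m then bil J u u else 0)"
  unfolding T_def osum_def line_alg_def Let_def by auto

lemma h_W: "x \<in> carrier A1 \<Longrightarrow> h x \<in> W"
  by (rule sub_iso_in[OF h])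

lemma h_carrier: "x \<in> carrier A1 \<Longrightarrow> h x \<in> carrier J"
  using h_W W_carrier by blast

lemma \<Phi>_lin: "lin_on (carrier T) \<Phi>"
  unfolding lin_on_def \<Phi>_def vtrunc_add vtrunc_smul
    lin_on_add[OF sub_iso_lin[OF h] vtrunc_carrier vtrunc_carrier]
    lin_on_smul[OF sub_iso_lin[OF h] vtrunc_carrier]
  by (simp add: vsmul_add_left vsmul_add algebra_simps)

lemma \<Phi>_carrier: "\<Phi> c \<in> carrier J"
  unfolding \<Phi>_def using h_carrier[OF vtrunc_carrier] u by simp

lemma \<Phi>_unitv: "i < m \<Longrightarrow> \<Phi> (unitv i) = h (unitv i)" "\<Phi> (unitv m) = u"
  unfolding \<Phi>_def vtrunc_unitv using sub_iso_0[OF h] by (auto simp: unitv_def)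

lemma \<Phi>_bij: "bij_betw \<Phi> (carrier T) (carrier J)"
  unfolding bij_betw_def
proof
  show "inj_on \<Phi> (carrier T)"
  proof (rule lin_on_inj_on[OF \<Phi>_lin subspace_carrier])
    fix c assume c: "c \<in> carrier T" and \<Phi>c: "\<Phi> c = 0"
    have "bil J (\<Phi> c) u = c m * bil J u u"
      unfolding \<Phi>_def using h_W[OF vtrunc_carrier] unfolding W_def
      by (simp add: bil_add_left bil_smul_left)
    then have cm: "c m = 0" using \<Phi>c uu by simp
    then have "h (vtrunc m c) = h 0" using \<Phi>c sub_iso_0[OF h] unfolding \<Phi>_def by simp
    then have "vtrunc m c = 0" using sub_iso_inj[OF h vtrunc_carrier] by simp
    then show "c = 0" using c cm dim_T unfolding carrier_def vtrunc_def
      by (auto simp: fun_eq_iff) (metis less_Suc_eq not_less)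
  qed
  show "\<Phi> ` carrier T = carrier J"
  proof
    show "\<Phi> ` carrier T \<subseteq> carrier J" using \<Phi>_carrier by blast
    show "carrier J \<subseteq> \<Phi> ` carrier T"
    proof
      fix z assume z: "z \<in> carrier J"
      define t where "t = bil J z u / bil J u u"
      obtain y where y: "y \<in> carrier A1" "h y = z - vsmul t u"
        using sub_iso_surj[OF h orth_decomp[OF z]] unfolding t_def by blast
      define c where "c k = (if k < m then y k else if k = m then t else 0)" for k
      have "c \<in> carrier T" unfolding carrier_def c_def dim_T by simp
      moreover have "vtrunc m c = y"
        using y(1) unfolding c_def carrier_def vtrunc_def by (auto simp: fun_eq_iff)
      then have "\<Phi> c = z" unfolding \<Phi>_def using y(2) by (simp add: c_def)
      ultimately show "z \<in> \<Phi> ` carrier T" by blast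
    qed
  qed
qed

lemma \<Phi>_mul_unitv:
  assumes i: "i < dim T" and j: "j < dim T"
  shows "\<Phi> (mul T (unitv i) (unitv j)) = mul J (\<Phi> (unitv i)) (\<Phi> (unitv j))"
proof (cases "i < m \<and> j < m")
  case True
  then have ij: "i < dim A1" "j < dim A1" by auto
  have "mul T (unitv i) (unitv j) = mul A1 (unitv i) (unitv j)"
    unfolding mul_unitv[OF i j] mul_unitv[OF ij] using True dim_T cst_T by (auto simp: fun_eq_iff)
  moreover have "vtrunc m (mul A1 (unitv i) (unitv j)) = mul A1 (unitv i) (unitv j)"
    by (simp add: vtrunc_id)
  moreover have "mul A1 (unitv i) (unitv j) m = 0" unfolding mul_def by simp
  ultimately have "\<Phi> (mul T (unitv i) (unitv j)) = h (mul A1 (unitv i) (unitv j))"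
    unfolding \<Phi>_def by simp
  then show ?thesis using True \<Phi>_unitv sub_iso_mul[OF h] by simp
next
  case False
  then have "i = m \<or> j = m" using i j dim_T by auto
  then have "mul J (\<Phi> (unitv i)) (\<Phi> (unitv j)) = 0"
    using \<Phi>_unitv(2) mul_u \<Phi>_carrier by auto
  moreover have "mul T (unitv i) (unitv j) = 0"
    unfolding mul_unitv[OF i j] using False cst_T by (auto simp: fun_eq_iff)
  moreover have "\<Phi> 0 = 0" using lin_on_0[OF \<Phi>_lin subspace_carrier] .
  ultimately show ?thesis by simp
qed

lemma \<Phi>_bil_unitv:
  assumes i: "i < dim T" and j: "j < dim T"
  shows "bil J (\<Phi> (unitv i)) (\<Phi> (unitv j)) = gram T i j"
proof -
  have ij: "i < m + 1" "j < m + 1" using i j dim_T by auto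
  have h_orth: "k < m \<Longrightarrow> bil J (h (unitv k)) u = 0 \<and> bil J u (h (unitv k)) = 0" for k
    using h_W[of "unitv k"] pe_sym[OF pe u h_carrier[of "unitv k"]] unfolding W_def by simp
  show ?thesis
  proof (cases "i < m \<and> j < m")
    case True
    then show ?thesis
      using gram_T[OF ij] \<Phi>_unitv sub_iso_bil[OF h, of "unitv i" "unitv j"] bil_unitv[of i A1 j]
      by simp
  next
    case False
    then consider "i < m" "j = m" | "i = m" "j < m" | "i = m" "j = m" using ij by linarith
    then show ?thesis using gram_T[OF ij] \<Phi>_unitv h_orth by cases simp_all
  qed
qed

lemma osum_iso: "alg_iso T J"
  unfolding alg_iso_iff_sub_iso
  using sub_iso_from_basis[OF \<Phi>_bij \<Phi>_lin lin_on_id] \<Phi>_mul_unitv \<Phi>_bil_unitv by auto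

end

subsection \<open>An isotropic vector in the annihilator yields a double extension\<close>

lemma cubic_coeffs_zero:
  fixes c3 c2 c1 c0 :: "nat \<Rightarrow> 'k::field_char_0"
  assumes "\<And>t. vsmul (t*t*t) c3 + vsmul (t*t) c2 + vsmul t c1 + c0 = 0"
  shows "c3 = 0 \<and> c2 = 0 \<and> c1 = 0 \<and> c0 = 0"
proof -
  have p: "t*t*t * c3 k + t*t * c2 k + t * c1 k + c0 k = 0" for t k
    using fun_cong[OF assms[of t], of k] by simp
  have "c3 k = 0 \<and> c2 k = 0 \<and> c1 k = 0 \<and> c0 k = 0" for k
  proof -
    have c0: "c0 k = 0" using p[of 0 k] by simp
    have e1: "c3 k + c2 k + c1 k = 0" using p[of 1 k] c0 by simp
    have e2: "- c3 k + c2 k - c1 k = 0" using p[of "-1" k] c0 by simp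
    have e3: "8 * c3 k + 4 * c2 k + 2 * c1 k = 0" using p[of 2 k] c0 by (simp add: algebra_simps)
    have "2 * c2 k = 0" using e1 e2 by (simp add: algebra_simps)
    then have c2: "c2 k = 0" by simp
    then have c1: "c1 k = - c3 k" using e1 by (simp add: eq_neg_iff_add_eq_0 add.commute)
    have "6 * c3 k = 0" using e3 c2 c1 by (simp add: algebra_simps)
    then show ?thesis using c0 c1 c2 by simp
  qed
  then show ?thesis by (auto simp: fun_eq_iff)
qed

text \<open>\<open>P\<close> is the orthogonal projection onto \<open>W = {a, b}\<^sup>\<bottom>\<close>, and \<open>pmul\<close> the product of \<open>J\<close>
  compressed into \<open>W\<close>.\<close>
locale hyperbolic_pair =
  fixes J :: "'k::field_char_0 alg" and a b :: "nat \<Rightarrow> 'k"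
  assumes pe: "pe_jordan J" and a: "a \<in> carrier J" and b: "b \<in> carrier J"
    and b_ann: "\<forall>y\<in>carrier J. mul J b y = 0"
    and bb: "bil J b b = 0" and ab: "bil J a b = 1" and aa: "bil J a a = 0"
begin

definition P :: "(nat \<Rightarrow> 'k) \<Rightarrow> nat \<Rightarrow> 'k" where
  "P z = z - vsmul (bil J z b) a - vsmul (bil J z a) b"

definition pmul :: "(nat \<Rightarrow> 'k) \<Rightarrow> (nat \<Rightarrow> 'k) \<Rightarrow> nat \<Rightarrow> 'k" where
  "pmul x y = P (mul J x y)"

definition W :: "(nat \<Rightarrow> 'k) set" where
  "W = {x\<in>carrier J. bil J x a = 0 \<and> bil J x b = 0}"

lemma ba: "bil J b a = 1"
  using pe_sym[OF pe a b] ab by simp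

lemma P_add: "P (x + y) = P x + P y"
  and P_smul: "P (vsmul c x) = vsmul c (P x)"
  unfolding P_def by (simp_all add: bil_add_left bil_smul_left fun_eq_iff algebra_simps)

lemma P_carrier [simp]: "x \<in> carrier J \<Longrightarrow> P x \<in> carrier J"
  unfolding P_def using a b by simp

lemma P_lin: "lin_on S P"
  unfolding lin_on_def by (simp add: P_add P_smul)

lemma pmul_add_left: "pmul (x + y) z = pmul x z + pmul y z"
  and pmul_add_right: "pmul z (x + y) = pmul z x + pmul z y"
  and pmul_smul_left: "pmul (vsmul c x) z = vsmul c (pmul x z)"
  and pmul_smul_right: "pmul z (vsmul c x) = vsmul c (pmul z x)"
  unfolding pmul_def
  by (simp_all add: mul_add_left mul_add_right mul_smul_left mul_smul_right P_add P_smul)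

lemma pmul_carrier [simp]: "pmul x y \<in> carrier J"
  unfolding pmul_def by simp

lemma pmul_sum_right: "pmul z (sum f I) = (\<Sum>i\<in>I. pmul z (f i))"
proof -
  have "pmul z 0 = 0" unfolding pmul_def P_def by simp
  then show ?thesis
    using sum_comp_morphism[of "pmul z" f I] by (simp add: pmul_add_right comp_def)
qed

lemma W_carrier: "W \<subseteq> carrier J"
  unfolding W_def by blast

lemma W_subspace: "VS.subspace W"
  unfolding VS.subspace_def W_def by (auto simp: bil_add_left bil_smul_left)

lemma a_notin_W: "a \<notin> W"
  unfolding W_def using ab by simp

lemma P_W: "z \<in> carrier J \<Longrightarrow> P z \<in> W"
  unfolding W_def P_def using a b ab aa bb ba by (simp add: bil_diff_left bil_smul_left)

lemma pmul_W [simp]: "x \<in> carrier J \<Longrightarrow> y \<in> carrier J \<Longrightarrow> pmul x y \<in> W"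
  unfolding pmul_def by (simp add: P_W)

lemma bil_W_a_b: "w \<in> W \<Longrightarrow> bil J w a = 0 \<and> bil J a w = 0 \<and> bil J w b = 0 \<and> bil J b w = 0"
  unfolding W_def using pe_sym[OF pe] a b by auto

lemma bil_P_W: "w \<in> W \<Longrightarrow> bil J (P z) w = bil J z w"
  using bil_W_a_b unfolding P_def by (simp add: bil_diff_left bil_smul_left)

lemma bil_pmul_W: "w \<in> W \<Longrightarrow> bil J (pmul u v) w = bil J (mul J u v) w"
  unfolding pmul_def using bil_P_W by simp

lemma mul_b: "y \<in> carrier J \<Longrightarrow> mul J b y = 0" "y \<in> carrier J \<Longrightarrow> mul J y b = 0"
  using b_ann pe_comm[OF pe b] by auto

lemma mul_decomp:
  assumes "x \<in> carrier J" "y \<in> carrier J"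
  shows "mul J x y = P (mul J x y) + vsmul (bil J (mul J x y) a) b"
proof -
  have "bil J (mul J x y) b = 0" using pe_invariant[OF pe assms b] mul_b assms by simp
  then show ?thesis unfolding P_def by (simp add: fun_eq_iff)
qed

lemma mul_P_mul:
  assumes "y \<in> carrier J" "u \<in> carrier J" "v \<in> carrier J"
  shows "mul J y (P (mul J u v)) = mul J y (mul J u v)"
    and "mul J (P (mul J u v)) y = mul J (mul J u v) y"
proof -
  have "mul J y (mul J u v) = mul J y (P (mul J u v)) + vsmul (bil J (mul J u v) a) (mul J y b)"
    by (subst mul_decomp[OF assms(2,3)]) (simp add: mul_add_right mul_smul_right)
  then show "mul J y (P (mul J u v)) = mul J y (mul J u v)" using mul_b assms by simp
  then show "mul J (P (mul J u v)) y = mul J (mul J u v) y"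
    using pe_comm[OF pe] assms by (metis P_carrier carrier_mul)
qed

lemma pmul_comm: "x \<in> carrier J \<Longrightarrow> y \<in> carrier J \<Longrightarrow> pmul x y = pmul y x"
  unfolding pmul_def using pe_comm[OF pe] by metis

lemma pmul_jordan:
  assumes x: "x \<in> carrier J" and y: "y \<in> carrier J"
  shows "pmul x (pmul y (pmul x x)) = pmul (pmul x y) (pmul x x)"
proof -
  have "pmul x (pmul y (pmul x x)) = P (mul J x (mul J y (mul J x x)))"
    unfolding pmul_def using x y by (simp add: mul_P_mul)
  also have "\<dots> = P (mul J (mul J x y) (mul J x x))" using pe_jordan_identity[OF pe x y] by simp
  also have "\<dots> = pmul (pmul x y) (pmul x x)" unfolding pmul_def using x y by (simp add: mul_P_mul)
  finally show ?thesis .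
qed

lemma realization_pe_jordan:
  assumes g: "sub_iso J1 J W P g"
  shows "pe_jordan J1"
proof (rule sub_iso_pe_jordan[OF g])
  fix x y z assume "x \<in> W" "y \<in> W" "z \<in> W"
  then have x: "x \<in> carrier J" and y: "y \<in> carrier J" and z: "z \<in> carrier J" and zW: "z \<in> W"
    using W_carrier by auto
  show "P (mul J x y) = P (mul J y x)" using pe_comm[OF pe x y] by simp
  show "P (mul J x (P (mul J y (P (mul J x x))))) = P (mul J (P (mul J x y)) (P (mul J x x)))"
    using pmul_jordan[OF x y] unfolding pmul_def .
  show "bil J x y = bil J y x" using pe_sym[OF pe x y] .
  have "bil J (P (mul J x y)) z = bil J x (mul J y z)"
    using bil_P_W[OF zW] pe_invariant[OF pe x y z] x y by simp
  also have "\<dots> = bil J (P (mul J y z)) x"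
    using bil_P_W[OF \<open>x \<in> W\<close>] pe_sym[OF pe x] y z by simp
  finally show "bil J (P (mul J x y)) z = bil J x (P (mul J y z))"
    using pe_sym[OF pe x] y z by simp
next
  fix x assume x: "x \<in> W" and orth: "\<forall>y\<in>W. bil J x y = 0"
  have xJ: "x \<in> carrier J" using x W_carrier by auto
  have xab: "bil J x a = 0" "bil J x b = 0" using x unfolding W_def by auto
  show "x = 0"
  proof (rule pe_nondegenerate[OF pe xJ])
    fix z assume z: "z \<in> carrier J"
    have "bil J x z = bil J x (P z + vsmul (bil J z b) a + vsmul (bil J z a) b)"
      unfolding P_def by (simp add: fun_eq_iff)
    also have "\<dots> = bil J x (P z)" using xab by (simp add: bil_add_right bil_smul_right)
    also have "\<dots> = 0" using orth P_W[OF z] by simp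
    finally show "bil J x z = 0" .
  qed
qed

text \<open>The compression only discards multiples of \<open>b\<close>, which annihilate \<open>J\<close>.\<close>
lemma realization_nilpotent:
  assumes g: "sub_iso J1 J W P g" and nil: "nilpotent_alg J"
  shows "nilpotent_alg J1"
proof (rule sub_iso_nilpotent[OF g nil W_carrier, of "range (\<lambda>t. vsmul t b)"])
  show "0 \<in> range (\<lambda>t. vsmul t b)" by (rule image_eqI[of _ _ 0]) simp_all
  show "range (\<lambda>t. vsmul t b) \<subseteq> carrier J" using b by auto
  fix e e' assume "e \<in> range (\<lambda>t. vsmul t b)" "e' \<in> range (\<lambda>t. vsmul t b)"
  then obtain t t' where "e = vsmul t b" "e' = vsmul t' b" by blast
  then show "e + e' \<in> range (\<lambda>t. vsmul t b)"
    by (intro image_eqI[of _ _ "t + t'"]) (simp_all add: vsmul_add_left)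
next
  fix e y assume "e \<in> range (\<lambda>t. vsmul t b)" "y \<in> carrier J"
  then show "mul J e y = 0 \<and> mul J y e = 0" using mul_b by (auto simp: mul_smul_left mul_smul_right)
next
  fix x y assume "x \<in> carrier J" "y \<in> carrier J"
  then have "P (mul J x y) - mul J x y = vsmul (- bil J (mul J x y) a) b"
    using mul_decomp by (simp add: fun_eq_iff)
  then show "P (mul J x y) - mul J x y \<in> range (\<lambda>t. vsmul t b)" by (metis rangeI)
next
  fix e assume "e \<in> range (\<lambda>t. vsmul t b)" "e \<in> W"
  then obtain t where "e = vsmul t b" "bil J (vsmul t b) a = 0" unfolding W_def by blast
  then show "e = 0" using ba by (simp add: bil_smul_left)
qed

definition jordan_defect where
  "jordan_defect x y = pmul x (pmul y (pmul x x)) - pmul (pmul x y) (pmul x x)"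

definition jordan_polar_a where
  "jordan_polar_a x y = pmul a (pmul y (pmul x x)) + pmul x (pmul y (pmul a x))
    + pmul x (pmul y (pmul x a)) - pmul (pmul a y) (pmul x x) - pmul (pmul x y) (pmul a x)
    - pmul (pmul x y) (pmul x a)"

definition jordan_polar_aa where
  "jordan_polar_aa x y = pmul a (pmul y (pmul a x)) + pmul a (pmul y (pmul x a))
    + pmul x (pmul y (pmul a a)) - pmul (pmul a y) (pmul a x) - pmul (pmul a y) (pmul x a)
    - pmul (pmul x y) (pmul a a)"

lemma jordan_defect_expand:
  "jordan_defect (vsmul t a + x) y = vsmul (t * t * t) (jordan_defect a y)
    + vsmul (t * t) (jordan_polar_aa x y) + vsmul t (jordan_polar_a x y) + jordan_defect x y"
  unfolding jordan_defect_def jordan_polar_a_def jordan_polar_aa_def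
  by (simp add: pmul_add_left pmul_add_right pmul_smul_left pmul_smul_right fun_eq_iff
      algebra_simps)

text \<open>Each \<open>t\<close>-coefficient of the Jordan identity at \<open>t a + x\<close> vanishes separately.\<close>
lemma jordan_polar_zero:
  assumes x: "x \<in> carrier J" and y: "y \<in> carrier J"
  shows "jordan_defect a y = 0" "jordan_polar_aa x y = 0" "jordan_polar_a x y = 0"
proof -
  have "jordan_defect (vsmul t a + x) y = 0" for t
    using pmul_jordan[of "vsmul t a + x" y] a x y unfolding jordan_defect_def by simp
  then show "jordan_defect a y = 0" "jordan_polar_aa x y = 0" "jordan_polar_a x y = 0"
    using cubic_coeffs_zero[of "jordan_defect a y" "jordan_polar_aa x y" "jordan_polar_a x y"
        "jordan_defect x y"]
    unfolding jordan_defect_expand by simp_all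
qed

lemma pmul_a_sq_mul:
  assumes x: "x \<in> carrier J" and y: "y \<in> carrier J"
  shows "pmul a (pmul (pmul x x) y) =
    pmul (pmul x x) (pmul a y) + vsmul 2 (pmul (pmul a x) (pmul x y))
      - vsmul 2 (pmul x (pmul (pmul a x) y))"
proof -
  have comm: "pmul x a = pmul a x" "pmul (pmul x x) y = pmul y (pmul x x)"
    "pmul (pmul x x) (pmul a y) = pmul (pmul a y) (pmul x x)"
    "pmul (pmul a x) (pmul x y) = pmul (pmul x y) (pmul a x)"
    "pmul (pmul a x) y = pmul y (pmul a x)"
    using pmul_comm x y a by auto
  have "pmul a (pmul (pmul x x) y) - (pmul (pmul x x) (pmul a y)
      + vsmul 2 (pmul (pmul a x) (pmul x y)) - vsmul 2 (pmul x (pmul (pmul a x) y)))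
    = jordan_polar_a x y"
    unfolding jordan_polar_a_def comm by (simp add: fun_eq_iff algebra_simps)
  then show ?thesis using jordan_polar_zero(3)[OF x y] by simp
qed

lemma pmul_a_commutator:
  assumes x: "x \<in> carrier J" and y: "y \<in> carrier J"
  shows "pmul (pmul a x) (pmul a y) - pmul a (pmul (pmul a x) y) =
    vsmul (1/2) (pmul (pmul (pmul a a) y) x - pmul (pmul a a) (pmul y x))"
proof -
  have comm: "pmul x a = pmul a x" "pmul (pmul a x) (pmul a y) = pmul (pmul a y) (pmul a x)"
    "pmul (pmul a x) y = pmul y (pmul a x)"
    "pmul (pmul (pmul a a) y) x = pmul x (pmul y (pmul a a))"
    "pmul (pmul a a) (pmul y x) = pmul (pmul x y) (pmul a a)"
    using pmul_comm x y a by auto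
  have "pmul (pmul a x) (pmul a y) - pmul a (pmul (pmul a x) y)
      - vsmul (1/2) (pmul (pmul (pmul a a) y) x - pmul (pmul a a) (pmul y x))
    = vsmul (-1/2) (jordan_polar_aa x y)"
    unfolding jordan_polar_aa_def comm by (simp add: fun_eq_iff algebra_simps)
  then show ?thesis using jordan_polar_zero(2)[OF x y] by simp
qed

lemma pmul_a_x0_comm:
  assumes x: "x \<in> carrier J"
  shows "pmul a (pmul (pmul a a) x) = pmul (pmul a a) (pmul a x)"
proof -
  have "pmul (pmul a a) x = pmul x (pmul a a)"
    "pmul (pmul a a) (pmul a x) = pmul (pmul a x) (pmul a a)"
    using pmul_comm x a by auto
  then show ?thesis using jordan_polar_zero(1)[OF x x] unfolding jordan_defect_def by simp
qed

lemma pmul_a_sq_comm: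
  assumes x: "x \<in> carrier J"
  shows "pmul x (pmul a (pmul x x)) = pmul (pmul x x) (pmul a x)"
proof -
  have "pmul x a = pmul a x" "pmul (pmul x x) (pmul a x) = pmul (pmul a x) (pmul x x)"
    using pmul_comm x a by auto
  then show ?thesis using pmul_jordan[OF x a] by simp
qed

lemma pmul_a_twice_sq:
  assumes x: "x \<in> carrier J"
  shows "pmul a (pmul a (pmul x x)) =
    vsmul 2 (pmul (pmul a x) (pmul a x)) - vsmul 2 (pmul x (pmul a (pmul a x)))
      + pmul (pmul a a) (pmul x x)"
proof -
  have comm: "pmul x a = pmul a x" using pmul_comm x a by auto
  have "pmul a (pmul a (pmul x x)) - (vsmul 2 (pmul (pmul a x) (pmul a x))
      - vsmul 2 (pmul x (pmul a (pmul a x))) + pmul (pmul a a) (pmul x x)) = jordan_polar_a x a"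
    unfolding jordan_polar_a_def comm by (simp add: fun_eq_iff algebra_simps)
  then show ?thesis using jordan_polar_zero(3)[OF x a] by simp
qed

lemma pmul_a_thrice:
  assumes x: "x \<in> carrier J"
  shows "pmul a (pmul a (pmul a x)) =
    vsmul (3/2) (pmul (pmul a a) (pmul a x)) - vsmul (1/2) (pmul x (pmul a (pmul a a)))"
proof -
  have comm: "pmul x a = pmul a x" "pmul (pmul a x) (pmul a a) = pmul (pmul a a) (pmul a x)"
    using pmul_comm x a by auto
  have "pmul a (pmul a (pmul a x))
      - (vsmul (3/2) (pmul (pmul a a) (pmul a x)) - vsmul (1/2) (pmul x (pmul a (pmul a a))))
    = vsmul (1/2) (jordan_polar_aa x a)"
    unfolding jordan_polar_aa_def comm by (simp add: fun_eq_iff algebra_simps)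
  then show ?thesis using jordan_polar_zero(2)[OF x a] by simp
qed

lemma pmul_a_twice_x0: "pmul a (pmul a (pmul a a)) = pmul (pmul a a) (pmul a a)"
  using jordan_polar_zero(1)[OF a a] unfolding jordan_defect_def by simp

end

locale hyperbolic_realization = hyperbolic_pair +
  fixes A1 and h
  assumes h: "sub_iso A1 J W P h"
begin

abbreviation "m \<equiv> dim A1"

text \<open>The admissible pair is left multiplication by \<open>a\<close> and the square of \<open>a\<close>, both
  compressed into \<open>W\<close> and read back in \<open>A1\<close>.\<close>
definition hinv where "hinv = inv_into (carrier A1) h"
definition dmat where "dmat i j = hinv (pmul a (h (unitv j))) i"
definition x0 where "x0 = hinv (pmul a a)"
definition \<kappa> where "\<kappa> = bil J (mul J a a) a"

lemma h_W: "x \<in> carrier A1 \<Longrightarrow> h x \<in> W"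
  by (rule sub_iso_in[OF h])

lemma h_carrier [simp]: "x \<in> carrier A1 \<Longrightarrow> h x \<in> carrier J"
  using h_W W_carrier by blast

lemma hinv: "w \<in> W \<Longrightarrow> hinv w \<in> carrier A1 \<and> h (hinv w) = w"
  using sub_iso_bij[OF h] unfolding hinv_def bij_betw_def by (metis f_inv_into_f inv_into_into)

lemma x0_carrier [simp]: "x0 \<in> carrier A1" and h_x0 [simp]: "h x0 = pmul a a"
  unfolding x0_def using hinv[of "pmul a a"] a by simp_all

lemma h_Dmap [simp]:
  assumes c: "c \<in> carrier A1"
  shows "h (Dmap A1 dmat c) = pmul a (h c)"
proof -
  have hc: "hinv (pmul a (h (unitv j))) \<in> carrier A1"
      "h (hinv (pmul a (h (unitv j)))) = pmul a (h (unitv j))"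
    if "j < m" for j
    using hinv[of "pmul a (h (unitv j))"] that a by simp_all
  have Dsum: "Dmap A1 dmat c = (\<Sum>j<m. vsmul (c j) (hinv (pmul a (h (unitv j)))))"
  proof
    fix i
    show "Dmap A1 dmat c i = (\<Sum>j<m. vsmul (c j) (hinv (pmul a (h (unitv j))))) i"
      using hc(1) unfolding Dmap_def dmat_def sum_fun_apply carrier_def
      by (auto simp: mult.commute)
  qed
  have "h (Dmap A1 dmat c) = (\<Sum>j<m. h (vsmul (c j) (hinv (pmul a (h (unitv j))))))"
    unfolding Dsum by (rule lin_on_sum[OF sub_iso_lin[OF h] subspace_carrier]) (simp add: hc)
  also have "\<dots> = (\<Sum>j<m. vsmul (c j) (pmul a (h (unitv j))))"
    by (rule sum.cong[OF refl]) (simp add: lin_on_smul[OF sub_iso_lin[OF h]] hc)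
  also have "\<dots> = pmul a (h c)"
    unfolding arg_cong[OF lin_on_expand[OF sub_iso_lin[OF h] c], of "pmul a"] pmul_sum_right
      pmul_smul_right ..
  finally show ?thesis .
qed

lemma admissible_dmat: "admissible A1 dmat x0"
proof -
  have hmul [simp]: "u \<in> carrier A1 \<Longrightarrow> v \<in> carrier A1 \<Longrightarrow> h (mul A1 u v) = pmul (h u) (h v)" for u v
    using sub_iso_mul[OF h] unfolding pmul_def by simp
  have [simp]: "u \<in> carrier A1 \<Longrightarrow> v \<in> carrier A1 \<Longrightarrow> h (u + v) = h u + h v" for u v
    by (rule lin_on_add[OF sub_iso_lin[OF h]])
  have [simp]: "u \<in> carrier A1 \<Longrightarrow> v \<in> carrier A1 \<Longrightarrow> h (u - v) = h u - h v" for u v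
    by (rule lin_on_diff[OF sub_iso_lin[OF h] subspace_carrier])
  have [simp]: "u \<in> carrier A1 \<Longrightarrow> h (vsmul c u) = vsmul c (h u)" for u c
    by (rule lin_on_smul[OF sub_iso_lin[OF h]])
  note inj = sub_iso_inj[OF h]
  show ?thesis
    unfolding admissible_def Let_def
  proof (intro conjI ballI x0_carrier)
    fix x y assume x: "x \<in> carrier A1" and y: "y \<in> carrier A1"
    show "Dmap A1 dmat (mul A1 (mul A1 x x) y) =
      vsub (vadd (mul A1 (mul A1 x x) (Dmap A1 dmat y))
          (vsmul 2 (mul A1 (Dmap A1 dmat x) (mul A1 x y))))
        (vsmul 2 (mul A1 x (mul A1 (Dmap A1 dmat x) y)))"
      by (rule inj) (simp_all add: x y pmul_a_sq_mul)
    show "vsub (mul A1 (Dmap A1 dmat x) (Dmap A1 dmat y))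
        (Dmap A1 dmat (mul A1 (Dmap A1 dmat x) y)) =
      vsmul (1 / 2) (assoc A1 x0 y x)"
      unfolding assoc_def by (rule inj) (simp_all add: x y pmul_a_commutator)
    show "Dmap A1 dmat (mul A1 x0 x) = mul A1 x0 (Dmap A1 dmat x)"
      by (rule inj) (simp_all add: x pmul_a_x0_comm)
    show "mul A1 x (Dmap A1 dmat (mul A1 x x)) = mul A1 (mul A1 x x) (Dmap A1 dmat x)"
      by (rule inj) (simp_all add: x pmul_a_sq_comm)
    show "Dmap A1 dmat (Dmap A1 dmat (mul A1 x x)) =
      vadd (vsub (vsmul 2 (mul A1 (Dmap A1 dmat x) (Dmap A1 dmat x)))
        (vsmul 2 (mul A1 x (Dmap A1 dmat (Dmap A1 dmat x))))) (mul A1 x0 (mul A1 x x))"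
      by (rule inj) (simp_all add: x pmul_a_twice_sq)
    show "Dmap A1 dmat (Dmap A1 dmat (Dmap A1 dmat x)) =
      vsub (vsmul (3 / 2) (mul A1 x0 (Dmap A1 dmat x)))
        (vsmul (1 / 2) (mul A1 x (Dmap A1 dmat x0)))"
      by (rule inj) (simp_all add: x pmul_a_thrice)
  next
    show "Dmap A1 dmat (Dmap A1 dmat x0) = mul A1 x0 x0"
      by (rule inj) (simp_all add: pmul_a_twice_x0)
  qed
qed

lemma bil_a_mul: "x \<in> carrier A1 \<Longrightarrow> y \<in> carrier A1 \<Longrightarrow>
    bil A1 (Dmap A1 dmat x) y = bil J a (mul J (h x) (h y))"
  using sub_iso_bil[OF h, of "Dmap A1 dmat x" y] bil_pmul_W[OF h_W] pe_invariant[OF pe a]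
  by simp

lemma bil_symmetric_dmat: "bil_symmetric_map A1 dmat"
  unfolding bil_symmetric_map_def
proof (intro ballI)
  fix x y assume x: "x \<in> carrier A1" and y: "y \<in> carrier A1"
  have "bil A1 x (Dmap A1 dmat y) = bil A1 (Dmap A1 dmat y) x"
    using sub_iso_bil[OF h] pe_sym[OF pe] x y by (metis carrier_Dmap h_carrier)
  then show "bil A1 (Dmap A1 dmat x) y = bil A1 x (Dmap A1 dmat y)"
    using bil_a_mul x y pe_comm[OF pe] by simp
qed

definition T where "T = dext A1 dmat x0 \<kappa>"

definition middle where "middle c = vtrunc m (\<lambda>l. c (Suc l))"

definition \<Phi> where "\<Phi> c = vsmul (c 0) a + h (middle c) + vsmul (c (m + 1)) b"

lemma middle_carrier [simp]: "middle c \<in> carrier A1"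
  unfolding middle_def by simp

lemma middle_add: "middle (x + y) = middle x + middle y"
  and middle_smul: "middle (vsmul c x) = vsmul c (middle x)"
  and middle_zero [simp]: "middle 0 = 0"
  and middle_unitv: "middle (unitv 0) = 0" "l < m \<Longrightarrow> middle (unitv (Suc l)) = unitv l"
    "middle (unitv (Suc m)) = 0"
  by (auto simp: middle_def vtrunc_def unitv_def fun_eq_iff)

lemma dim_T: "dim T = m + 2"
  unfolding T_def dext_def Let_def by simp

lemma cst_T:
  assumes "k < m + 2"
  shows "cst T 0 0 k = (if k = m + 1 then \<kappa> else if k = 0 then 0 else x0 (k - 1))"
    and "l < m \<Longrightarrow> cst T 0 (Suc l) k =
      (if k = m + 1 then bil A1 x0 (unitv l) else if k = 0 then 0
       else Dmap A1 dmat (unitv l) (k - 1))"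
    and "l < m \<Longrightarrow> cst T (Suc l) 0 k = cst T 0 (Suc l) k"
    and "l < m \<Longrightarrow> l' < m \<Longrightarrow> cst T (Suc l) (Suc l') k =
      (if k = m + 1 then bil A1 (Dmap A1 dmat (unitv l)) (unitv l') else if k = 0 then 0
       else cst A1 l l' (k - 1))"
  using assms unfolding T_def dext_def Let_def by simp_all

lemma cst_T_b: "i = m + 1 \<or> j = m + 1 \<Longrightarrow> cst T i j k = 0"
  unfolding T_def dext_def Let_def by auto

lemma gram_T: "i < m + 2 \<Longrightarrow> j < m + 2 \<Longrightarrow> gram T i j =
    (if (i = 0 \<and> j = m + 1) \<or> (i = m + 1 \<and> j = 0) then 1
     else if i = 0 \<or> j = 0 \<or> i = m + 1 \<or> j = m + 1 then 0 else gram A1 (i - 1) (j - 1))"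
  unfolding T_def dext_def Let_def by simp

lemma index_cases:
  assumes "i < m + 2"
  obtains "i = 0" | l where "i = Suc l" "l < m" | "i = m + 1"
  using assms by (cases i) (auto simp: less_Suc_eq)

lemma \<Phi>_lin: "lin_on (carrier T) \<Phi>"
  unfolding lin_on_def \<Phi>_def middle_add middle_smul
  by (simp add: lin_on_add[OF sub_iso_lin[OF h] middle_carrier middle_carrier]
      lin_on_smul[OF sub_iso_lin[OF h] middle_carrier] vsmul_add_left vsmul_add algebra_simps)

lemma \<Phi>_carrier: "\<Phi> c \<in> carrier J"
  unfolding \<Phi>_def using a b by simp

lemma \<Phi>_zero: "\<Phi> 0 = 0"
  unfolding \<Phi>_def using sub_iso_0[OF h] by simp

lemma \<Phi>_unitv: "\<Phi> (unitv 0) = a" "l < m \<Longrightarrow> \<Phi> (unitv (Suc l)) = h (unitv l)" "\<Phi> (unitv (Suc m)) = b"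
  unfolding \<Phi>_def middle_unitv using sub_iso_0[OF h] by (simp_all add: unitv_def)

lemma \<Phi>_inj: "inj_on \<Phi> (carrier T)"
proof (rule lin_on_inj_on[OF \<Phi>_lin subspace_carrier])
  fix c assume c: "c \<in> carrier T" and \<Phi>c: "\<Phi> c = 0"
  let ?c' = "middle c"
  have orth: "bil J (h ?c') a = 0 \<and> bil J (h ?c') b = 0"
    using bil_W_a_b[OF h_W[OF middle_carrier]] by simp
  have "bil J (\<Phi> c) b = c 0" "bil J (\<Phi> c) a = c (m + 1)"
    unfolding \<Phi>_def using orth ab bb ba aa by (simp_all add: bil_add_left bil_smul_left)
  then have c0: "c 0 = 0" and cm: "c (m + 1) = 0" using \<Phi>c by simp_all
  then have "h ?c' = h 0" using \<Phi>c sub_iso_0[OF h] unfolding \<Phi>_def by simp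
  then have "?c' = 0" using sub_iso_inj[OF h middle_carrier] by simp
  then have mid: "c (Suc l) = 0" if "l < m" for l
    using that fun_cong[of ?c' 0 l] unfolding middle_def vtrunc_def by simp
  have "c k = 0" for k
  proof (cases "k < m + 2")
    case True
    then show ?thesis by (cases rule: index_cases) (use c0 cm mid in auto)
  next
    case False
    then show ?thesis using c dim_T unfolding carrier_def by simp
  qed
  then show "c = 0" by auto
qed

lemma \<Phi>_surj: "\<Phi> ` carrier T = carrier J"
proof
  show "\<Phi> ` carrier T \<subseteq> carrier J" using \<Phi>_carrier by blast
  show "carrier J \<subseteq> \<Phi> ` carrier T"
  proof
    fix z assume z: "z \<in> carrier J"
    obtain y where y: "y \<in> carrier A1" "h y = P z" using sub_iso_surj[OF h P_W[OF z]] by blast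
    define c where "c k = (if k = 0 then bil J z b else if k \<le> m then y (k - 1)
      else if k = m + 1 then bil J z a else 0)" for k
    have cT: "c \<in> carrier T" unfolding carrier_def c_def dim_T by simp
    have "middle c = y"
      using y(1) unfolding middle_def vtrunc_def c_def carrier_def by (auto simp: fun_eq_iff)
    moreover have "c 0 = bil J z b" "c (m + 1) = bil J z a" by (simp_all add: c_def)
    ultimately have "\<Phi> c = vsmul (bil J z b) a + P z + vsmul (bil J z a) b"
      unfolding \<Phi>_def using y(2) by simp
    also have "\<dots> = z" unfolding P_def by (simp add: fun_eq_iff)
    finally show "z \<in> \<Phi> ` carrier T" using cT by blast
  qed
qed

lemma \<Phi>_bij: "bij_betw \<Phi> (carrier T) (carrier J)"
  using \<Phi>_inj \<Phi>_surj unfolding bij_betw_def ..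

lemma \<Phi>_mul_unitv_coords:
  assumes "i < m + 2" "j < m + 2"
  shows "\<Phi> (mul T (unitv i) (unitv j)) =
    vsmul (cst T i j 0) a + h (middle (cst T i j)) + vsmul (cst T i j (m + 1)) b"
proof -
  have "mul T (unitv i) (unitv j) = (\<lambda>k. if k < m + 2 then cst T i j k else 0)"
    using mul_unitv[of i T j] assms dim_T by simp
  moreover have "middle (\<lambda>k. if k < m + 2 then cst T i j k else 0) = middle (cst T i j)"
    by (auto simp: middle_def vtrunc_def fun_eq_iff)
  ultimately show ?thesis unfolding \<Phi>_def by simp
qed

text \<open>Modulo \<open>b\<close>, every product in \<open>J\<close> is its compression; the \<open>b\<close>-component of \<open>u v\<close> is
  \<open>B(u v, a)\<close>, which is what the structure constants of \<open>T\<close> at index \<open>m + 1\<close> record.\<close>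
lemma \<Phi>_mul_unitv_a:
  assumes l: "l < m"
  shows "\<Phi> (mul T (unitv 0) (unitv (Suc l))) = mul J a (h (unitv l))"
proof -
  have ul: "unitv l \<in> carrier A1" using l by simp
  have "bil A1 x0 (unitv l) = bil J (pmul a a) (h (unitv l))"
    using sub_iso_bil[OF h x0_carrier ul] by simp
  also have "\<dots> = bil J (mul J a (h (unitv l))) a"
    using bil_pmul_W[OF h_W[OF ul]] pe_invariant[OF pe a a h_carrier[OF ul]] pe_sym[OF pe a]
    by simp
  finally have "bil A1 x0 (unitv l) = bil J (mul J a (h (unitv l))) a" .
  moreover have "middle (cst T 0 (Suc l)) = Dmap A1 dmat (unitv l)"
    using cst_T(2)[OF _ l] by (auto simp: middle_def vtrunc_def Dmap_def fun_eq_iff)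
  ultimately have "\<Phi> (mul T (unitv 0) (unitv (Suc l))) = pmul a (h (unitv l))
      + vsmul (bil J (mul J a (h (unitv l))) a) b"
    using \<Phi>_mul_unitv_coords[of 0 "Suc l"] cst_T(2)[OF _ l] l h_Dmap[OF ul] by simp
  then show ?thesis using mul_decomp[OF a h_carrier[OF ul]] unfolding pmul_def by simp
qed

lemma \<Phi>_mul_unitv_aa: "\<Phi> (mul T (unitv 0) (unitv 0)) = mul J a a"
proof -
  have "middle (cst T 0 0) = x0"
    using cst_T(1) x0_carrier unfolding carrier_def by (auto simp: middle_def vtrunc_def fun_eq_iff)
  then have "\<Phi> (mul T (unitv 0) (unitv 0)) = pmul a a + vsmul \<kappa> b"
    using \<Phi>_mul_unitv_coords[of 0 0] cst_T(1) by simp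
  then show ?thesis using mul_decomp[OF a a] unfolding pmul_def \<kappa>_def by simp
qed

lemma \<Phi>_mul_unitv_inner:
  assumes l: "l < m" and l': "l' < m"
  shows "\<Phi> (mul T (unitv (Suc l)) (unitv (Suc l'))) = mul J (h (unitv l)) (h (unitv l'))"
proof -
  have u: "unitv l \<in> carrier A1" "unitv l' \<in> carrier A1" using l l' by simp_all
  have "middle (cst T (Suc l) (Suc l')) = mul A1 (unitv l) (unitv l')"
    using cst_T(4)[OF _ l l'] mul_unitv[of l A1 l'] l l'
    by (auto simp: middle_def vtrunc_def fun_eq_iff)
  moreover have "bil A1 (Dmap A1 dmat (unitv l)) (unitv l') =
      bil J (mul J (h (unitv l)) (h (unitv l'))) a"
    using bil_a_mul[OF u] pe_sym[OF pe a] by simp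
  ultimately have "\<Phi> (mul T (unitv (Suc l)) (unitv (Suc l'))) =
      pmul (h (unitv l)) (h (unitv l')) + vsmul (bil J (mul J (h (unitv l)) (h (unitv l'))) a) b"
    using \<Phi>_mul_unitv_coords[of "Suc l" "Suc l'"] cst_T(4)[OF _ l l'] l l' sub_iso_mul[OF h u]
    unfolding pmul_def by simp
  then show ?thesis using mul_decomp[OF h_carrier h_carrier, OF u] unfolding pmul_def by simp
qed

lemma \<Phi>_mul_unitv:
  assumes i: "i < dim T" and j: "j < dim T"
  shows "\<Phi> (mul T (unitv i) (unitv j)) = mul J (\<Phi> (unitv i)) (\<Phi> (unitv j))"
proof -
  have i2: "i < m + 2" and j2: "j < m + 2" using i j dim_T by auto
  have swap: "mul T (unitv (Suc l)) (unitv 0) = mul T (unitv 0) (unitv (Suc l))" if "l < m" for l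
    using cst_T(3)[OF _ that] mul_unitv[of "Suc l" T 0] mul_unitv[of 0 T "Suc l"] that dim_T
    by (auto simp: fun_eq_iff)
  show ?thesis
  proof (cases "i = m + 1 \<or> j = m + 1")
    case True
    then have "mul T (unitv i) (unitv j) = 0"
      unfolding mul_unitv[OF i j] using cst_T_b by (auto simp: fun_eq_iff)
    moreover have "mul J (\<Phi> (unitv i)) (\<Phi> (unitv j)) = 0"
      using True \<Phi>_unitv(3) mul_b \<Phi>_carrier by auto
    ultimately show ?thesis using \<Phi>_zero by simp
  next
    case False
    then consider "i = 0" "j = 0" | l where "i = 0" "j = Suc l" "l < m"
      | l where "i = Suc l" "j = 0" "l < m" | l l' where "i = Suc l" "j = Suc l'" "l < m" "l' < m"
      using index_cases[OF i2] index_cases[OF j2] by metis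
    then show ?thesis
    proof cases
      case 1
      then show ?thesis using \<Phi>_mul_unitv_aa \<Phi>_unitv(1) by simp
    next
      case (2 l)
      then show ?thesis using \<Phi>_mul_unitv_a \<Phi>_unitv by simp
    next
      case (3 l)
      then show ?thesis
        using swap \<Phi>_mul_unitv_a \<Phi>_unitv pe_comm[OF pe a h_carrier[of "unitv l"]] by simp
    next
      case (4 l l')
      then show ?thesis using \<Phi>_mul_unitv_inner \<Phi>_unitv by simp
    qed
  qed
qed

lemma \<Phi>_bil_unitv:
  assumes i: "i < dim T" and j: "j < dim T"
  shows "bil J (\<Phi> (unitv i)) (\<Phi> (unitv j)) = gram T i j"
proof -
  have i2: "i < m + 2" and j2: "j < m + 2" using i j dim_T by auto
  have orth: "l < m \<Longrightarrow> bil J (h (unitv l)) a = 0 \<and> bil J a (h (unitv l)) = 0 \<and>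
      bil J (h (unitv l)) b = 0 \<and> bil J b (h (unitv l)) = 0" for l
    using bil_W_a_b h_W by simp
  have inner: "l < m \<Longrightarrow> l' < m \<Longrightarrow> bil J (h (unitv l)) (h (unitv l')) = gram A1 l l'" for l l'
    using sub_iso_bil[OF h] bil_unitv[of l A1 l'] by simp
  from i2 show ?thesis
  proof (cases rule: index_cases)
    case 1
    with j2 show ?thesis
      by (cases rule: index_cases) (simp_all add: gram_T i2 j2 \<Phi>_unitv aa ab orth)
  next
    case (2 l)
    with j2 show ?thesis
      by (cases rule: index_cases) (simp_all add: gram_T i2 j2 \<Phi>_unitv orth inner)
  next
    case 3
    with j2 show ?thesis
      by (cases rule: index_cases) (simp_all add: gram_T i2 j2 \<Phi>_unitv ba bb orth)
  qed
qed

lemma dext_iso: "alg_iso T J"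
  unfolding alg_iso_iff_sub_iso
  using sub_iso_from_basis[OF \<Phi>_bij \<Phi>_lin lin_on_id] \<Phi>_mul_unitv \<Phi>_bil_unitv by auto

end

context hyperbolic_pair
begin

lemma gen_class_iso:
  assumes nil: "nilpotent_alg J"
    and IH: "\<And>J1 :: 'k alg. dim J1 < dim J \<Longrightarrow> pe_jordan J1 \<Longrightarrow> nilpotent_alg J1 \<Longrightarrow>
      \<exists>A\<in>gen_class. alg_iso A J1"
  shows "\<exists>A\<in>gen_class. alg_iso A J"
proof -
  obtain J1 g where g: "sub_iso J1 J W P g" and dim: "dim J1 < dim J"
    using sub_iso_exists[OF W_subspace W_carrier P_lin _ a a_notin_W] P_W by blast
  obtain A1 where A1: "A1 \<in> gen_class" "alg_iso A1 J1"
    using IH[OF dim realization_pe_jordan[OF g] realization_nilpotent[OF g nil]] by blast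
  then obtain f where "sub_iso A1 J1 (carrier J1) id f" unfolding alg_iso_iff_sub_iso by blast
  then interpret hyperbolic_realization J a b A1 "g \<circ> f"
    using sub_iso_comp g by unfold_locales
  have "T \<in> gen_class"
    unfolding T_def by (rule gen_class.dext[OF A1(1) admissible_dmat bil_symmetric_dmat])
  then show ?thesis using dext_iso by blast
qed

end

context anisotropic_annihilator
begin

lemma gen_class_iso:
  assumes nil: "nilpotent_alg J"
    and IH: "\<And>J1 :: 'k alg. dim J1 < dim J \<Longrightarrow> pe_jordan J1 \<Longrightarrow> nilpotent_alg J1 \<Longrightarrow>
      \<exists>A\<in>gen_class. alg_iso A J1"
  shows "\<exists>A\<in>gen_class. alg_iso A J"
proof -
  obtain J1 g where g: "sub_iso J1 J W id g" and dim: "dim J1 < dim J"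
    using sub_iso_exists[OF W_subspace W_carrier lin_on_id _ u u_notin_W] mul_W by auto
  obtain A1 where A1: "A1 \<in> gen_class" "alg_iso A1 J1"
    using IH[OF dim realization_pe_jordan[OF g] realization_nilpotent[OF g nil]] by blast
  then obtain f where "sub_iso A1 J1 (carrier J1) id f" unfolding alg_iso_iff_sub_iso by blast
  then interpret anisotropic_realization J u A1 "g \<circ> f"
    using sub_iso_comp g by unfold_locales
  have "T \<in> gen_class"
    unfolding T_def by (intro gen_class.osum A1(1) gen_class.base line_alg_E_class uu)
  then show ?thesis using osum_iso by blast
qed

end

lemma hyperbolic_pair_exists:
  assumes pe: "pe_jordan J" and b: "b \<in> carrier J" "b \<noteq> 0"
    and b_ann: "\<forall>y\<in>carrier J. mul J b y = 0" and bb: "bil J b b = 0"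
  obtains a where "hyperbolic_pair J a b"
proof -
  obtain y where y: "y \<in> carrier J" "bil J b y \<noteq> 0"
    using pe_nondegenerate[OF pe b(1)] b(2) by blast
  define y' where "y' = vsmul (1 / bil J b y) y"
  have y': "y' \<in> carrier J" "bil J y' b = 1" "bil J b y' = 1"
    unfolding y'_def using y pe_sym[OF pe b(1) y(1)] by (simp_all add: bil_smul_left bil_smul_right)
  define a where "a = y' - vsmul (bil J y' y' / 2) b"
  have "a \<in> carrier J" "bil J a b = 1" "bil J a a = 0"
    unfolding a_def using y' b bb
    by (simp_all add: bil_diff_left bil_diff_right bil_smul_left bil_smul_right)
  then have "hyperbolic_pair J a b"
    using pe b(1) b_ann bb by unfold_locales
  then show thesis by (rule that)
qed

theorem nilpotent_pe_jordan_gen_class: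
  fixes J :: "'k::field_char_0 alg"
  shows "pe_jordan J \<Longrightarrow> nilpotent_alg J \<Longrightarrow> \<exists>A\<in>gen_class. alg_iso A J"
proof (induct "dim J" arbitrary: J rule: less_induct)
  case less
  show ?case
  proof (cases "dim J = 0")
    case True
    then have "J \<in> gen_class" by (intro gen_class.base) (simp add: E_class_def)
    then show ?thesis using alg_iso_refl by blast
  next
    case False
    obtain z where z: "z \<in> carrier J" "z \<noteq> 0" "\<forall>y\<in>carrier J. mul J z y = 0"
      using nilpotent_annihilator_exists[OF less(3) False] by blast
    show ?thesis
    proof (cases "\<exists>u\<in>carrier J. (\<forall>y\<in>carrier J. mul J u y = 0) \<and> bil J u u \<noteq> 0")
      case True
      then obtain u where "anisotropic_annihilator J u"
        using less(2) by (auto intro: anisotropic_annihilator.intro)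
      then show ?thesis using anisotropic_annihilator.gen_class_iso less by blast
    next
      case False
      then obtain a where "hyperbolic_pair J a z"
        using hyperbolic_pair_exists[OF less(2) z] z(1,3) by blast
      then show ?thesis using hyperbolic_pair.gen_class_iso less by blast
    qed
  qed
qed

theorem mainTheorem7:
  fixes J :: "('k::field_char_0) alg"
  assumes "pe_jordan J"
    and "nilpotent_alg J"
    and "\<not> (\<exists>E\<in>E_class. alg_iso J E)"
  shows "\<exists>A\<in>gen_class. alg_iso J A"
  using nilpotent_pe_jordan_gen_class[OF assms(1,2)] alg_iso_sym by blast

end
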